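(* Let $\mathcal{M}$ be a complete Riemannian submanifold of $\mathbb{R}^n$ with the induced Riemannian metric, $f:\mathbb{R}^n\to\mathbb{R}$ proper lower semicontinuous, $\tilde f$ a smoothing function of $f$, and $R$ a retraction on $\mathcal{M}$. Assume that for every $\bar\mu>0$ and every $\bar x\in\mathcal{M}$ the level set $\{x\in\mathcal{M}:\tilde f(x,\bar\mu)\le\tilde f(\bar x,\bar\mu)\}$ is compact. Let $\{x_\ell\}$ be an infinite sequence generated by the Riemannian smoothing steepest descent method (RSSD) described below with $\delta_{opt}=\mu_{opt}=0$, and let $K=\{\ell:\|\eta_\ell\|\le\delta_\ell\}$. Then $K$ is an infinite set and \[ \lim_{\ell\to\infty,\ \ell\in K}\delta_\ell=0,\qquad \lim_{\ell\to\infty,\ \ell\in K}\mu_\ell=0 . \]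
   Context: Smoothing function: $\tilde f:\mathbb{R}^n\times\mathbb{R}_+\to\mathbb{R}$ with $\tilde f(\cdot,\mu)$ continuously differentiable for each $\mu>0$, $\lim_{z\to x,\mu\downarrow0}\tilde f(z,\mu)=f(x)$, and $|\tilde f(x,\mu)-f(x)|\le\kappa\omega(\mu)$ for some $\kappa>0$, $\omega:(0,\infty)\to(0,\infty)$ with $\omega(\mu)\to0$. Retraction: smooth $R:T\mathcal{M}\to\mathcal{M}$ with $R_x(0_x)=x$ and $dR_x(0_x)=\mathrm{id}_{T_x\mathcal{M}}$, $R_x$ being the restriction to the tangent space $T_x\mathcal{M}$. $\operatorname{grad}\tilde f(x,\mu)=\operatorname{Proj}_{T_x\mathcal{M}}\nabla_x\tilde f(x,\mu)$. RSSD: inputs $x_0\in\mathcal{M}$, $\delta_{opt}\ge0$, $\delta_0>0$, $\mu_{opt}\ge0$, $\mu_0>0$, $\beta\in(0,1)$, $\bar\alpha>0$, $\theta_\delta\in(0,1)$, $\theta_\mu\in(0,1)$, $\sigma\in(0,1)$. For $\ell=0,1,2,\dots$: compute $\eta_\ell=-\operatorname{grad}\tilde f(x_\ell,\mu_\ell)$. If $\|\eta_\ell\|\le\delta_{opt}$ and $\mu_\ell\le\mu_{opt}$, stop. Else if $\|\eta_\ell\|\le\delta_\ell$, set $\mu_{\ell+1}=\theta_\mu\mu_\ell$, $\delta_{\ell+1}=\theta_\delta\delta_\ell$, $x_{\ell+1}=x_\ell$. Otherwise set $\mu_{\ell+1}=\mu_\ell$, $\delta_{\ell+1}=\delta_\ell$,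 let $t_\ell=\beta^m\bar\alpha$ where $m$ is the smallest nonnegative integer with $\tilde f(R_{x_\ell}(\beta^m\bar\alpha\eta_\ell),\mu_\ell)\le\tilde f(x_\ell,\mu_\ell)-\sigma\beta^m\bar\alpha\|\operatorname{grad}\tilde f(x_\ell,\mu_\ell)\|^2$, and set $x_{\ell+1}=R_{x_\ell}(t_\ell\eta_\ell)$. *)

theory Defs
  imports "HOL-Analysis.Analysis"
begin

(* Ambient space R^n is an arbitrary euclidean_space 'a, with its standard inner product. *)

primrec iter_dd :: "'a::euclidean_space list \<Rightarrow> ('a \<Rightarrow> real) \<Rightarrow> 'a \<Rightarrow> real" where
  "iter_dd [] g = g"
| "iter_dd (v # vs) g = (\<lambda>x. frechet_derivative (iter_dd vs g) (at x) v)"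

definition smooth_on :: "'a::euclidean_space set \<Rightarrow> ('a \<Rightarrow> 'b::euclidean_space) \<Rightarrow> bool" where
  "smooth_on U F \<longleftrightarrow> (\<forall>b\<in>Basis. \<forall>vs. set vs \<subseteq> Basis \<longrightarrow>
      iter_dd vs (\<lambda>y. F y \<bullet> b) differentiable_on U)"

definition smooth_map_on :: "'a::euclidean_space set \<Rightarrow> ('a \<Rightarrow> 'b::euclidean_space) \<Rightarrow> bool" where
  "smooth_map_on S F \<longleftrightarrow> (\<forall>p\<in>S. \<exists>U G. open U \<and> p \<in> U \<and> smooth_on U G \<and> (\<forall>x\<in>S \<inter> U. G x = F x))"

definition embedded_submanifold :: "'a::euclidean_space set \<Rightarrow> nat \<Rightarrow> bool" where
  "embedded_submanifold M d \<longleftrightarrow> (\<forall>p\<in>M. \<exists>U V (\<psi>::'a \<Rightarrow> 'a) \<psi>' L.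
      open U \<and> open V \<and> p \<in> U \<and> subspace L \<and> dim L = d \<and>
      smooth_on U \<psi> \<and> smooth_on V \<psi>' \<and>
      (\<forall>x\<in>U. \<psi> x \<in> V \<and> \<psi>' (\<psi> x) = x) \<and> (\<forall>y\<in>V. \<psi>' y \<in> U \<and> \<psi> (\<psi>' y) = y) \<and>
      \<psi> ` (M \<inter> U) = V \<inter> L)"

definition tangent_space :: "'a::euclidean_space set \<Rightarrow> 'a \<Rightarrow> 'a set" where
  "tangent_space M x = {v. \<exists>(\<gamma>::real \<Rightarrow> 'a) e. e > 0 \<and> smooth_on {-e<..<e} \<gamma> \<and>
      (\<forall>t\<in>{-e<..<e}. \<gamma> t \<in> M) \<and> \<gamma> 0 = x \<and> (\<gamma> has_vector_derivative v) (at 0)}"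

definition tangent_bundle :: "'a::euclidean_space set \<Rightarrow> ('a \<times> 'a) set" where
  "tangent_bundle M = {(x, v). x \<in> M \<and> v \<in> tangent_space M x}"

definition curve_length :: "(real \<Rightarrow> 'a::euclidean_space) \<Rightarrow> real" where
  "curve_length \<gamma> = integral {0..1} (\<lambda>t. norm (vector_derivative \<gamma> (at t)))"

definition riem_dist_lt :: "'a::euclidean_space set \<Rightarrow> 'a \<Rightarrow> 'a \<Rightarrow> real \<Rightarrow> bool" where
  "riem_dist_lt M x y e \<longleftrightarrow> (\<exists>\<gamma>. \<gamma> piecewise_C1_differentiable_on {0..1} \<and> \<gamma> ` {0..1} \<subseteq> M \<and>
      \<gamma> 0 = x \<and> \<gamma> 1 = y \<and> curve_length \<gamma> < e)"

definition riem_complete :: "'a::euclidean_space set \<Rightarrow> bool" where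
  "riem_complete M \<longleftrightarrow> (\<forall>X::nat \<Rightarrow> 'a. (\<forall>n. X n \<in> M) \<longrightarrow>
      (\<forall>e>0. \<exists>N. \<forall>m\<ge>N. \<forall>n\<ge>N. riem_dist_lt M (X m) (X n) e) \<longrightarrow>
      (\<exists>x\<in>M. \<forall>e>0. \<exists>N. \<forall>n\<ge>N. riem_dist_lt M (X n) x e))"

definition complete_riemannian_submanifold :: "'a::euclidean_space set \<Rightarrow> bool" where
  "complete_riemannian_submanifold M \<longleftrightarrow> (\<exists>d. embedded_submanifold M d) \<and> riem_complete M"

definition lsc :: "('a::topological_space \<Rightarrow> real) \<Rightarrow> bool" where
  "lsc f \<longleftrightarrow> (\<forall>x. \<forall>c < f x. \<forall>\<^sub>F z in at x. c < f z)"

definition smoothing_function ::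
  "('a::euclidean_space \<Rightarrow> real) \<Rightarrow> ('a \<Rightarrow> real \<Rightarrow> real) \<Rightarrow> ('a \<Rightarrow> real \<Rightarrow> 'a) \<Rightarrow> bool" where
  "smoothing_function f ft gradf \<longleftrightarrow>
     (\<forall>\<mu>>0. (\<forall>x. ((\<lambda>z. ft z \<mu>) has_derivative (\<lambda>h. gradf x \<mu> \<bullet> h)) (at x)) \<and>
             continuous_on UNIV (\<lambda>x. gradf x \<mu>)) \<and>
     (\<forall>x. ((\<lambda>(z, \<mu>). ft z \<mu>) \<longlongrightarrow> f x) (at (x, 0) within UNIV \<times> {0<..})) \<and>
     (\<exists>\<kappa> > 0. \<exists>\<omega>::real \<Rightarrow> real. (\<forall>\<mu>>0. \<omega> \<mu> > 0) \<and> (\<omega> \<longlongrightarrow> 0) (at_right 0) \<and>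
        (\<forall>x. \<forall>\<mu>>0. \<bar>ft x \<mu> - f x\<bar> \<le> \<kappa> * \<omega> \<mu>))"

definition retraction :: "'a::euclidean_space set \<Rightarrow> ('a \<Rightarrow> 'a \<Rightarrow> 'a) \<Rightarrow> bool" where
  "retraction M R \<longleftrightarrow>
     (\<forall>(x, v)\<in>tangent_bundle M. R x v \<in> M) \<and>
     smooth_map_on (tangent_bundle M) (\<lambda>(x, v). R x v) \<and>
     (\<forall>x\<in>M. R x 0 = x) \<and>
     (\<forall>x\<in>M. (R x has_derivative (\<lambda>v. v)) (at 0 within tangent_space M x))"

(* Riemannian gradient: orthogonal projection of the Euclidean gradient onto T_x M *)
definition riem_grad :: "'a::euclidean_space set \<Rightarrow> ('a \<Rightarrow> real \<Rightarrow> 'a) \<Rightarrow> 'a \<Rightarrow> real \<Rightarrow> 'a" where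
  "riem_grad M gradf x \<mu> = closest_point (tangent_space M x) (gradf x \<mu>)"

definition rssd_run ::
  "'a::euclidean_space set \<Rightarrow> ('a \<Rightarrow> real \<Rightarrow> real) \<Rightarrow> ('a \<Rightarrow> real \<Rightarrow> 'a) \<Rightarrow> ('a \<Rightarrow> 'a \<Rightarrow> 'a) \<Rightarrow>
   'a \<Rightarrow> real \<Rightarrow> real \<Rightarrow> real \<Rightarrow> real \<Rightarrow> real \<Rightarrow> real \<Rightarrow> real \<Rightarrow> real \<Rightarrow> real \<Rightarrow>
   (nat \<Rightarrow> 'a) \<Rightarrow> (nat \<Rightarrow> real) \<Rightarrow> (nat \<Rightarrow> real) \<Rightarrow> (nat \<Rightarrow> 'a) \<Rightarrow> bool" where
  "rssd_run M ft gradf R x0 \<delta>opt \<delta>0 \<mu>opt \<mu>0 \<beta> \<alpha> \<theta>\<delta> \<theta>\<mu> \<sigma> x \<mu> \<delta> \<eta> \<longleftrightarrow>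
     x 0 = x0 \<and> \<mu> 0 = \<mu>0 \<and> \<delta> 0 = \<delta>0 \<and>
     (\<forall>l. \<eta> l = - riem_grad M gradf (x l) (\<mu> l) \<and>
          \<not> (norm (\<eta> l) \<le> \<delta>opt \<and> \<mu> l \<le> \<mu>opt) \<and>
          (if norm (\<eta> l) \<le> \<delta> l then
             \<mu> (Suc l) = \<theta>\<mu> * \<mu> l \<and> \<delta> (Suc l) = \<theta>\<delta> * \<delta> l \<and> x (Suc l) = x l
           else
             \<mu> (Suc l) = \<mu> l \<and> \<delta> (Suc l) = \<delta> l \<and>
             (\<exists>m::nat.
                (\<forall>k<m. \<not> ft (R (x l) ((\<beta> ^ k * \<alpha>) *\<^sub>R \<eta> l)) (\<mu> l)
                          \<le> ft (x l) (\<mu> l) - \<sigma> * (\<beta> ^ k * \<alpha>) * (norm (riem_grad M gradf (x l) (\<mu> l)))\<^sup>2) \<and>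
                ft (R (x l) ((\<beta> ^ m * \<alpha>) *\<^sub>R \<eta> l)) (\<mu> l)
                   \<le> ft (x l) (\<mu> l) - \<sigma> * (\<beta> ^ m * \<alpha>) * (norm (riem_grad M gradf (x l) (\<mu> l)))\<^sup>2 \<and>
                x (Suc l) = R (x l) ((\<beta> ^ m * \<alpha>) *\<^sub>R \<eta> l))))"

end

theory Submission
  imports Defs
begin

text \<open>
Suppose the test \<open>norm (\<eta> l) \<le> \<delta> l\<close> succeeded only finitely often. From then on \<open>\<mu>\<close> and
\<open>\<delta>\<close> are frozen, so every iteration is an Armijo backtracking step for the single \<open>C\<^sup>1\<close>
function \<open>\<phi> = (\<lambda>z. ft z \<mu>)\<close> along a Riemannian gradient longer than \<open>\<delta>\<close>. Each step decreases
\<open>\<phi>\<close> by at least \<open>\<sigma> t\<^sub>l \<delta>\<^sup>2\<close>; the iterates stay in a compact sublevel set, on which \<open>\<phi>\<close> is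
bounded below, so the accepted step sizes \<open>t\<^sub>l\<close> tend to zero. Along a subsequence the iterates
converge to some \<open>x\<^sup>*\<close>. Near \<open>x\<^sup>*\<close>, uniform first-order expansions of \<open>\<phi>\<close> and of the
retraction show that every step below a fixed threshold satisfies the Armijo condition, so
backtracking never has to produce arbitrarily small steps: a contradiction. Hence the test succeeds
infinitely often, and since \<open>\<delta>\<close> and \<open>\<mu>\<close> are multiplied by \<open>\<theta>\<delta>, \<theta>\<mu> < 1\<close> exactly at those
indices and stay constant otherwise, both tend to zero.

The expansion of the retraction is where the geometry enters: tangent spaces of a slice-chart
submanifold are linear subspaces, and a smooth local extension of the retraction to an open set
of pairs \<open>(x, v)\<close> is uniformly differentiable near \<open>(x\<^sup>*, 0)\<close>, with derivative in the
fibre direction equal to the identity.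
\<close>

section \<open>Smooth maps\<close>

lemma frechet_derivative_cong_open:
  assumes "open X" "y \<in> X" "\<And>z. z \<in> X \<Longrightarrow> f z = g z"
  shows "frechet_derivative f (at y) = frechet_derivative g (at y)"
proof -
  have "(f has_derivative D) (at y) \<longleftrightarrow> (g has_derivative D) (at y)" for D
    using has_derivative_transform_within_open[of f D y UNIV X g]
      has_derivative_transform_within_open[of g D y UNIV X f] assms by auto
  then show ?thesis unfolding frechet_derivative_def by simp
qed

lemma differentiable_on_cong_open:
  assumes "open V" "\<And>y. y \<in> V \<Longrightarrow> f y = g y" "f differentiable_on V"
  shows "g differentiable_on V"
  using assms unfolding differentiable_on_eq_differentiable_at[OF assms(1)] differentiable_def
  by (metis has_derivative_transform_within_open)

lemma frechet_derivative_Basis_expansion: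
  fixes f :: "'a::euclidean_space \<Rightarrow> real"
  assumes "f differentiable at p"
  shows "frechet_derivative f (at p) h = (\<Sum>i\<in>Basis. (h \<bullet> i) * frechet_derivative f (at p) i)"
proof -
  have lin: "linear (frechet_derivative f (at p))"
    using assms by (rule linear_frechet_derivative)
  have "frechet_derivative f (at p) h = frechet_derivative f (at p) (\<Sum>i\<in>Basis. (h \<bullet> i) *\<^sub>R i)"
    by (simp add: euclidean_representation)
  also have "\<dots> = (\<Sum>i\<in>Basis. (h \<bullet> i) * frechet_derivative f (at p) i)"
    using lin by (simp add: linear_sum linear_scale)
  finally show ?thesis .
qed

lemma has_derivative_compose_line:
  assumes "H differentiable at (a + t *\<^sub>R u)"
  shows "((\<lambda>s. H (a + s *\<^sub>R u)) has_derivative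
           (\<lambda>s. frechet_derivative H (at (a + t *\<^sub>R u)) (s *\<^sub>R u))) (at t)"
proof -
  have "((\<lambda>s. a + s *\<^sub>R u) has_derivative (\<lambda>s. s *\<^sub>R u)) (at t)"
    by (auto intro!: derivative_eq_intros)
  from diff_chain_at[OF this] show ?thesis
    using assms frechet_derivative_works by (auto simp: o_def)
qed

lemma iter_dd_append: "iter_dd (vs @ ws) h = iter_dd vs (iter_dd ws h)"
  by (induction vs) auto

lemma iter_dd_const: "iter_dd vs (\<lambda>z. c) = (\<lambda>z. if vs = [] then c else 0)"
  by (induction vs) auto

lemma iter_dd_cong_open:
  assumes "open V" "\<And>z. z \<in> V \<Longrightarrow> h z = h' z" "y \<in> V"
  shows "iter_dd vs h y = iter_dd vs h' y"
  using assms(3)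
proof (induction vs arbitrary: y)
  case Nil
  then show ?case using assms(2) by simp
next
  case (Cons v vs)
  have "frechet_derivative (iter_dd vs h) (at y) = frechet_derivative (iter_dd vs h') (at y)"
    using frechet_derivative_cong_open[OF assms(1) Cons.prems] Cons.IH by blast
  then show ?case by simp
qed

definition smooth_scalar_on :: "'a::euclidean_space set \<Rightarrow> ('a \<Rightarrow> real) \<Rightarrow> bool" where
  "smooth_scalar_on V h \<longleftrightarrow> (\<forall>vs. set vs \<subseteq> Basis \<longrightarrow> iter_dd vs h differentiable_on V)"

lemma smooth_on_iff_components:
  "smooth_on U F \<longleftrightarrow> (\<forall>b\<in>Basis. smooth_scalar_on U (\<lambda>y. F y \<bullet> b))"
  unfolding smooth_on_def smooth_scalar_on_def by blast

lemma smooth_scalar_on_iter_dd_differentiable: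
  assumes "smooth_scalar_on V h" "open V" "set vs \<subseteq> Basis" "y \<in> V"
  shows "iter_dd vs h differentiable at y"
  using assms differentiable_on_eq_differentiable_at unfolding smooth_scalar_on_def by blast

lemma smooth_scalar_on_cong:
  assumes "open V" "smooth_scalar_on V h" "\<And>z. z \<in> V \<Longrightarrow> h z = h' z"
  shows "smooth_scalar_on V h'"
  unfolding smooth_scalar_on_def
proof (intro allI impI)
  fix vs :: "'a list" assume "set vs \<subseteq> Basis"
  then have d: "iter_dd vs h differentiable_on V" using assms(2) unfolding smooth_scalar_on_def by blast
  show "iter_dd vs h' differentiable_on V"
    by (rule differentiable_on_cong_open[OF assms(1) _ d]) (rule iter_dd_cong_open[OF assms(1,3)])
qed

lemma smooth_scalar_on_const: "smooth_scalar_on V (\<lambda>z. c)"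
  by (simp add: smooth_scalar_on_def iter_dd_const)

lemma iter_dd_lincomb:
  assumes "open V" "smooth_scalar_on V h1" "smooth_scalar_on V h2" "set vs \<subseteq> Basis" "y \<in> V"
  shows "iter_dd vs (\<lambda>z. a * h1 z + b * h2 z) y = a * iter_dd vs h1 y + b * iter_dd vs h2 y"
  using assms(4,5)
proof (induction vs arbitrary: y)
  case Nil
  then show ?case by simp
next
  case (Cons v vs)
  then have vs: "set vs \<subseteq> Basis" by simp
  have d1: "(iter_dd vs h1 has_derivative frechet_derivative (iter_dd vs h1) (at y)) (at y)"
    and d2: "(iter_dd vs h2 has_derivative frechet_derivative (iter_dd vs h2) (at y)) (at y)"
    using smooth_scalar_on_iter_dd_differentiable[OF _ assms(1) vs Cons.prems(2)] assms(2,3)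
      frechet_derivative_works by blast+
  have "frechet_derivative (iter_dd vs (\<lambda>z. a * h1 z + b * h2 z)) (at y)
      = frechet_derivative (\<lambda>z. a * iter_dd vs h1 z + b * iter_dd vs h2 z) (at y)"
    by (rule frechet_derivative_cong_open[OF assms(1) Cons.prems(2)]) (simp add: Cons.IH vs)
  also have "\<dots> = (\<lambda>k. a * frechet_derivative (iter_dd vs h1) (at y) k
                        + b * frechet_derivative (iter_dd vs h2) (at y) k)"
    by (rule frechet_derivative_at[symmetric]) (intro has_derivative_add has_derivative_mult_right d1 d2)
  finally show ?case by simp
qed

lemma smooth_scalar_on_lincomb:
  assumes "open V" "smooth_scalar_on V h1" "smooth_scalar_on V h2"
  shows "smooth_scalar_on V (\<lambda>z. a * h1 z + b * h2 z)"
  unfolding smooth_scalar_on_def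
proof (intro allI impI)
  fix vs :: "'a list" assume vs: "set vs \<subseteq> Basis"
  have d: "(\<lambda>z. a * iter_dd vs h1 z + b * iter_dd vs h2 z) differentiable_on V"
    using assms vs unfolding smooth_scalar_on_def
    by (auto intro: differentiable_on_add differentiable_on_mult differentiable_on_const)
  show "iter_dd vs (\<lambda>z. a * h1 z + b * h2 z) differentiable_on V"
    by (rule differentiable_on_cong_open[OF assms(1) _ d]) (simp add: iter_dd_lincomb[OF assms vs])
qed

lemma smooth_scalar_on_sum:
  assumes "open V" "finite I" "\<And>i. i \<in> I \<Longrightarrow> smooth_scalar_on V (h i)"
  shows "smooth_scalar_on V (\<lambda>z. \<Sum>i\<in>I. c i * h i z)"
  using assms(2,3)
proof (induction I rule: finite_induct)
  case empty
  then show ?case using smooth_scalar_on_const by simp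
next
  case (insert i I)
  then show ?case
    using smooth_scalar_on_lincomb[OF assms(1), of "h i" "\<lambda>z. \<Sum>i\<in>I. c i * h i z" "c i" 1] by simp
qed

lemma smooth_scalar_on_directional_derivative:
  assumes "open V" "smooth_scalar_on V h"
  shows "smooth_scalar_on V (\<lambda>y. frechet_derivative h (at y) w)"
proof -
  have "smooth_scalar_on V (iter_dd [i] h)" if "i \<in> Basis" for i
    using assms(2) that unfolding smooth_scalar_on_def iter_dd_append[symmetric] by simp
  then have "smooth_scalar_on V (\<lambda>z. \<Sum>i\<in>Basis. (w \<bullet> i) * iter_dd [i] h z)"
    by (intro smooth_scalar_on_sum[OF assms(1)]) auto
  moreover have "(\<Sum>i\<in>Basis. (w \<bullet> i) * iter_dd [i] h z) = frechet_derivative h (at z) w"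
    if "z \<in> V" for z
    using smooth_scalar_on_iter_dd_differentiable[OF assms(2,1), of "[]"] that
    by (simp add: frechet_derivative_Basis_expansion[of h z w])
  ultimately show ?thesis by (rule smooth_scalar_on_cong[OF assms(1)])
qed

lemma smooth_scalar_on_iter_dd:
  assumes "open V" "smooth_scalar_on V h"
  shows "smooth_scalar_on V (iter_dd ws h)"
  by (induction ws) (simp_all add: assms smooth_scalar_on_directional_derivative)

lemma iter_dd_compose_line:
  assumes "open V" "smooth_scalar_on V h" "open I" "\<And>t. t \<in> I \<Longrightarrow> a + t *\<^sub>R u \<in> V" "t \<in> I"
  shows "iter_dd (replicate k 1) (\<lambda>t. h (a + t *\<^sub>R u)) t = iter_dd (replicate k u) h (a + t *\<^sub>R u)"
  using assms(5)
proof (induction k arbitrary: t)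
  case 0
  then show ?case by simp
next
  case (Suc k)
  define H where "H = iter_dd (replicate k u) h"
  have "H differentiable at (a + t *\<^sub>R u)"
    unfolding H_def using smooth_scalar_on_iter_dd[OF assms(1,2)] assms(1,4) Suc.prems
    by (metis empty_subsetI iter_dd.simps(1) list.set(1) smooth_scalar_on_iter_dd_differentiable)
  then have "frechet_derivative (\<lambda>s. H (a + s *\<^sub>R u)) (at t)
           = (\<lambda>s. frechet_derivative H (at (a + t *\<^sub>R u)) (s *\<^sub>R u))"
    by (rule frechet_derivative_at[symmetric, OF has_derivative_compose_line])
  moreover have "frechet_derivative (iter_dd (replicate k 1) (\<lambda>t. h (a + t *\<^sub>R u))) (at t)
      = frechet_derivative (\<lambda>s. H (a + s *\<^sub>R u)) (at t)"
    by (rule frechet_derivative_cong_open[OF assms(3) Suc.prems]) (simp add: Suc.IH H_def)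
  ultimately show ?case by (simp add: H_def)
qed

lemma smooth_on_compose_line:
  fixes F :: "'a::euclidean_space \<Rightarrow> 'b::euclidean_space"
  assumes "open V" "smooth_on V F" "\<And>t. t \<in> {-e<..<e} \<Longrightarrow> a + t *\<^sub>R u \<in> V"
  shows "smooth_on {-e<..<e} (\<lambda>t. F (a + t *\<^sub>R u))"
  unfolding smooth_on_def
proof (intro ballI allI impI)
  fix b :: 'b and vs :: "real list"
  assume b: "b \<in> Basis" and vs: "set vs \<subseteq> Basis"
  define h where "h = (\<lambda>y. F y \<bullet> b)"
  have h: "smooth_scalar_on V h" using assms(2) b unfolding h_def smooth_on_iff_components by blast
  define H where "H = iter_dd (replicate (length vs) u) h"
  have "H differentiable at (a + t *\<^sub>R u)" if "t \<in> {-e<..<e}" for t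
    using smooth_scalar_on_iter_dd_differentiable[OF smooth_scalar_on_iter_dd[OF assms(1) h] assms(1), of "[]"]
      assms(3)[OF that] unfolding H_def by simp
  then have "(\<lambda>s. H (a + s *\<^sub>R u)) differentiable at t" if "t \<in> {-e<..<e}" for t
    using has_derivative_compose_line that unfolding differentiable_def by blast
  then have d: "(\<lambda>s. H (a + s *\<^sub>R u)) differentiable_on {-e<..<e}"
    by (simp add: differentiable_on_eq_differentiable_at)
  have "iter_dd (replicate (length vs) 1) (\<lambda>t. h (a + t *\<^sub>R u)) differentiable_on {-e<..<e}"
    by (rule differentiable_on_cong_open[OF open_greaterThanLessThan _ d])
      (use iter_dd_compose_line[OF assms(1) h open_greaterThanLessThan assms(3)] in \<open>simp add: H_def\<close>)
  moreover have "vs = replicate (length vs) 1"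
    using vs by (simp add: replicate_length_same subset_iff)
  ultimately show "iter_dd vs (\<lambda>y. F (a + y *\<^sub>R u) \<bullet> b) differentiable_on {-e<..<e}"
    unfolding h_def by simp
qed

lemma smooth_on_imp_differentiable:
  fixes F :: "'a::euclidean_space \<Rightarrow> 'b::euclidean_space"
  assumes "smooth_on U F" "open U" "p \<in> U"
  shows "F differentiable at p"
proof -
  define F' where "F' = (\<lambda>h. \<Sum>b\<in>Basis. frechet_derivative (\<lambda>y. F y \<bullet> b) (at p) h *\<^sub>R b)"
  have "(F has_derivative F') (at p within UNIV)"
  proof (rule has_derivative_componentwise_within[THEN iffD2], rule ballI)
    fix i :: 'b assume i: "i \<in> Basis"
    have "(\<lambda>y. F y \<bullet> i) differentiable at p"
      using assms i smooth_scalar_on_iter_dd_differentiable[of U _ "[]"]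
      unfolding smooth_on_iff_components by simp
    moreover have "(\<lambda>h. F' h \<bullet> i) = frechet_derivative (\<lambda>y. F y \<bullet> i) (at p)"
      using i by (simp add: F'_def inner_sum_left inner_Basis if_distrib cong: if_cong)
    ultimately show "((\<lambda>x. F x \<bullet> i) has_derivative (\<lambda>x. F' x \<bullet> i)) (at p within UNIV)"
      by (metis frechet_derivative_works)
  qed
  then show ?thesis unfolding differentiable_def by auto
qed

lemma frechet_derivative_component:
  fixes F :: "'a::euclidean_space \<Rightarrow> 'b::euclidean_space"
  assumes "smooth_on U F" "open U" "p \<in> U" "b \<in> Basis"
  shows "frechet_derivative F (at p) h \<bullet> b = (\<Sum>i\<in>Basis. (h \<bullet> i) * iter_dd [i] (\<lambda>y. F y \<bullet> b) p)"
proof -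
  have "(F has_derivative frechet_derivative F (at p)) (at p within UNIV)"
    using smooth_on_imp_differentiable[OF assms(1-3)] frechet_derivative_works by blast
  then have "((\<lambda>y. F y \<bullet> b) has_derivative (\<lambda>h. frechet_derivative F (at p) h \<bullet> b)) (at p)"
    using has_derivative_componentwise_within assms(4) by blast
  then have "frechet_derivative F (at p) h \<bullet> b = frechet_derivative (\<lambda>y. F y \<bullet> b) (at p) h"
    using fun_cong[OF frechet_derivative_at] by blast
  also have "\<dots> = (\<Sum>i\<in>Basis. (h \<bullet> i) * frechet_derivative (\<lambda>y. F y \<bullet> b) (at p) i)"
    using assms smooth_scalar_on_iter_dd_differentiable[of U _ "[]"]
    by (intro frechet_derivative_Basis_expansion) (simp add: smooth_on_iff_components)
  finally show ?thesis by simp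
qed

section \<open>Uniform first-order expansions\<close>

lemma frechet_derivative_diff_bound:
  fixes F :: "'a::euclidean_space \<Rightarrow> 'b::euclidean_space"
  assumes "smooth_on U F" "open U" "p \<in> U" "q \<in> U"
  shows "norm (frechet_derivative F (at p) h - frechet_derivative F (at q) h)
    \<le> norm h * (\<Sum>b\<in>Basis. \<Sum>i\<in>Basis. \<bar>iter_dd [i] (\<lambda>y. F y \<bullet> b) p - iter_dd [i] (\<lambda>y. F y \<bullet> b) q\<bar>)"
proof -
  define c where "c b i = iter_dd [i] (\<lambda>y. F y \<bullet> b)" for b i
  have "norm (frechet_derivative F (at p) h - frechet_derivative F (at q) h)
      \<le> (\<Sum>b\<in>Basis. \<bar>(frechet_derivative F (at p) h - frechet_derivative F (at q) h) \<bullet> b\<bar>)"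
    by (rule norm_le_l1)
  also have "\<dots> = (\<Sum>b\<in>Basis. \<bar>\<Sum>i\<in>Basis. (h \<bullet> i) * (c b i p - c b i q)\<bar>)"
    using assms by (intro sum.cong) (simp_all add: inner_diff_left frechet_derivative_component c_def
        sum_subtractf right_diff_distrib)
  also have "\<dots> \<le> (\<Sum>b\<in>Basis. \<Sum>i\<in>Basis. norm h * \<bar>c b i p - c b i q\<bar>)"
    by (intro sum_mono order.trans[OF sum_abs]) (simp add: abs_mult Basis_le_norm mult_right_mono)
  finally show ?thesis by (simp add: sum_distrib_left c_def)
qed

definition opnorm_continuous_within ::
    "'a::real_normed_vector set \<Rightarrow> ('a \<Rightarrow> 'a \<Rightarrow> 'b::real_normed_vector) \<Rightarrow> 'a \<Rightarrow> bool" where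
  "opnorm_continuous_within U F' p0 \<longleftrightarrow> (\<forall>\<epsilon>>0. \<exists>\<rho>>0. \<forall>p\<in>U. dist p p0 < \<rho> \<longrightarrow>
      (\<forall>h. norm (F' p h - F' p0 h) \<le> \<epsilon> * norm h))"

lemma smooth_on_opnorm_continuous_derivative:
  fixes F :: "'a::euclidean_space \<Rightarrow> 'b::euclidean_space"
  assumes "smooth_on U F" "open U" "p0 \<in> U"
  shows "opnorm_continuous_within U (\<lambda>p. frechet_derivative F (at p)) p0"
  unfolding opnorm_continuous_within_def
proof (intro allI impI)
  fix \<epsilon> :: real assume "\<epsilon> > 0"
  define E where "E p = (\<Sum>b\<in>Basis. \<Sum>i\<in>Basis.
      \<bar>iter_dd [i] (\<lambda>y. F y \<bullet> b) p - iter_dd [i] (\<lambda>y. F y \<bullet> b) p0\<bar>)" for p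
  have "iter_dd [i] (\<lambda>y. F y \<bullet> b) differentiable_on U" if "b \<in> Basis" "i \<in> Basis" for b i
    using assms(1) that unfolding smooth_on_iff_components smooth_scalar_on_def
    by (metis empty_subsetI insert_subset list.set(1,2))
  then have "continuous_on U E"
    unfolding E_def by (intro continuous_intros differentiable_imp_continuous_on) auto
  then obtain \<rho> where "\<rho> > 0" and \<rho>: "\<And>p. p \<in> U \<Longrightarrow> dist p p0 < \<rho> \<Longrightarrow> E p < \<epsilon>"
    using assms(3) \<open>\<epsilon> > 0\<close> unfolding continuous_on_iff by (force simp: dist_real_def E_def)
  have "norm (frechet_derivative F (at p) h - frechet_derivative F (at p0) h) \<le> \<epsilon> * norm h"
    if "p \<in> U" "dist p p0 < \<rho>" for p h
    using frechet_derivative_diff_bound[OF assms(1,2) \<open>p \<in> U\<close> assms(3), of h]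
      mult_left_mono[OF less_imp_le[OF \<rho>[OF that]] norm_ge_zero[of h]]
    unfolding E_def by (simp add: mult.commute)
  then show "\<exists>\<rho>>0. \<forall>p\<in>U. dist p p0 < \<rho> \<longrightarrow>
      (\<forall>h. norm (frechet_derivative F (at p) h - frechet_derivative F (at p0) h) \<le> \<epsilon> * norm h)"
    using \<open>\<rho> > 0\<close> by blast
qed

lemma uniform_linearization:
  fixes F :: "'a::real_normed_vector \<Rightarrow> 'b::real_normed_vector"
  assumes "open U" "p0 \<in> U" "\<And>p. p \<in> U \<Longrightarrow> (F has_derivative F' p) (at p)"
    and "opnorm_continuous_within U F' p0" "\<epsilon> > 0"
  obtains \<rho> where "\<rho> > 0" "ball p0 \<rho> \<subseteq> U"
    "\<And>p q. p \<in> ball p0 \<rho> \<Longrightarrow> q \<in> ball p0 \<rho> \<Longrightarrow> norm (F q - F p - F' p (q - p)) \<le> \<epsilon> * norm (q - p)"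
proof -
  obtain \<rho>1 where "\<rho>1 > 0" and \<rho>1: "\<forall>p\<in>U. dist p p0 < \<rho>1 \<longrightarrow> (\<forall>h. norm (F' p h - F' p0 h) \<le> \<epsilon>/2 * norm h)"
    using assms(4)[unfolded opnorm_continuous_within_def, rule_format, of "\<epsilon>/2"] assms(5) by auto
  obtain \<rho>2 where "\<rho>2 > 0" "ball p0 \<rho>2 \<subseteq> U"
    using assms(1,2) open_contains_ball by blast
  define \<rho> where "\<rho> = min \<rho>1 \<rho>2"
  have B: "ball p0 \<rho> \<subseteq> U" using \<open>ball p0 \<rho>2 \<subseteq> U\<close> unfolding \<rho>_def by auto
  have close: "norm (F' w h - F' p0 h) \<le> \<epsilon>/2 * norm h" if "w \<in> ball p0 \<rho>" for w h
    using \<rho>1 B that unfolding \<rho>_def by (auto simp: dist_commute)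
  have "norm (F q - F p - F' p (q - p)) \<le> norm (q - p) * \<epsilon>"
    if p: "p \<in> ball p0 \<rho>" and q: "q \<in> ball p0 \<rho>" for p q
  proof (rule differentiable_bound_linearization[where S = "ball p0 \<rho>"])
    show "p + t *\<^sub>R (q - p) \<in> ball p0 \<rho>" if "t \<in> {0..1}" for t
      using convexD_alt[OF convex_ball p q, of t] that by (simp add: algebra_simps)
    show "(F has_derivative F' w) (at w within ball p0 \<rho>)" if "w \<in> ball p0 \<rho>" for w
      using assms(3) B that has_derivative_at_withinI by blast
    show "onorm (F' w - F' p) \<le> \<epsilon>" if "w \<in> ball p0 \<rho>" for w
    proof (rule onorm_bound)
      show "0 \<le> \<epsilon>" using assms(5) by simp
      fix h
      have "norm ((F' w - F' p) h) \<le> norm (F' w h - F' p0 h) + norm (F' p h - F' p0 h)"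
        using norm_triangle_ineq4[of "F' w h - F' p0 h" "F' p h - F' p0 h"] by simp
      also have "\<dots> \<le> \<epsilon> * norm h"
        using close[OF that, of h] close[OF p, of h] by simp
      finally show "norm ((F' w - F' p) h) \<le> \<epsilon> * norm h" .
    qed
  qed (rule p)
  then show thesis
    using that[of \<rho>] B \<open>\<rho>1 > 0\<close> \<open>\<rho>2 > 0\<close> unfolding \<rho>_def by (simp add: mult.commute)
qed

lemma gradient_uniform_linearization:
  fixes \<phi> :: "'a::euclidean_space \<Rightarrow> real"
  assumes "\<And>z. (\<phi> has_derivative (\<lambda>h. g z \<bullet> h)) (at z)" "continuous_on UNIV g" "\<epsilon> > 0"
  obtains \<rho> where "\<rho> > 0"
    "\<And>p q. dist p xs < \<rho> \<Longrightarrow> dist q xs < \<rho> \<Longrightarrow> \<phi> q - \<phi> p - g p \<bullet> (q - p) \<le> \<epsilon> * norm (q - p)"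
proof -
  have "\<exists>\<rho>>0. \<forall>p\<in>UNIV. dist p xs < \<rho> \<longrightarrow> (\<forall>h. norm (g p \<bullet> h - g xs \<bullet> h) \<le> e * norm h)"
    if "e > 0" for e
  proof -
    obtain \<rho> where "\<rho> > 0" and \<rho>: "\<forall>p. dist p xs < \<rho> \<longrightarrow> dist (g p) (g xs) < e"
      using assms(2) \<open>e > 0\<close> unfolding continuous_on_iff by blast
    have "norm (g p \<bullet> h - g xs \<bullet> h) \<le> dist (g p) (g xs) * norm h" for p h
      using Cauchy_Schwarz_ineq2[of "g p - g xs" h] by (simp add: inner_diff_left dist_norm)
    also have "dist (g p) (g xs) * norm h \<le> e * norm h" if "dist p xs < \<rho>" for p h
      using \<rho> that by (intro mult_right_mono) auto
    finally show ?thesis using \<open>\<rho> > 0\<close> by blast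
  qed
  then have cont: "opnorm_continuous_within UNIV (\<lambda>p h. g p \<bullet> h) xs"
    unfolding opnorm_continuous_within_def by blast
  obtain \<rho> where "\<rho> > 0" "ball xs \<rho> \<subseteq> UNIV" and lin: "\<And>p q. p \<in> ball xs \<rho> \<Longrightarrow>
      q \<in> ball xs \<rho> \<Longrightarrow> norm (\<phi> q - \<phi> p - g p \<bullet> (q - p)) \<le> \<epsilon> * norm (q - p)"
    by (rule uniform_linearization[of UNIV xs \<phi> "\<lambda>p h. g p \<bullet> h", OF open_UNIV UNIV_I assms(1) cont assms(3)]) auto
  show thesis
  proof (rule that[OF \<open>\<rho> > 0\<close>])
    fix p q assume "dist p xs < \<rho>" "dist q xs < \<rho>"
    then have "norm (\<phi> q - \<phi> p - g p \<bullet> (q - p)) \<le> \<epsilon> * norm (q - p)"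
      by (intro lin) (simp_all add: dist_commute)
    then show "\<phi> q - \<phi> p - g p \<bullet> (q - p) \<le> \<epsilon> * norm (q - p)" by simp
  qed
qed

section \<open>Tangent spaces\<close>

lemma closest_point_subspace:
  fixes T :: "'a::euclidean_space set"
  assumes "subspace T"
  shows "closest_point T g \<in> T" "g \<bullet> closest_point T g = (norm (closest_point T g))\<^sup>2"
    "norm (closest_point T g) \<le> norm g"
proof -
  have cl: "closed T" and cv: "convex T" and "0 \<in> T"
    using assms closed_subspace subspace_imp_convex subspace_0 by auto
  then show P: "closest_point T g \<in> T" using closest_point_exists(1) by blast
  define P where "P = closest_point T g"
  \<comment> \<open>Testing the variational inequality of the projection with \<open>0\<close> and \<open>2P\<close> gives orthogonality.\<close>
  have "(g - P) \<bullet> (0 - P) \<le> 0"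
    unfolding P_def by (rule closest_point_dot[OF cv cl \<open>0 \<in> T\<close>])
  moreover have "(g - P) \<bullet> (2 *\<^sub>R P - P) \<le> 0"
    unfolding P_def by (rule closest_point_dot[OF cv cl subspace_mul[OF assms P]])
  ultimately have o: "(g - P) \<bullet> P = 0" by (simp add: inner_diff_right scaleR_2)
  then show "g \<bullet> closest_point T g = (norm (closest_point T g))\<^sup>2"
    unfolding P_def[symmetric] by (simp add: inner_diff_left power2_norm_eq_inner)
  have "(norm g)\<^sup>2 = (norm (g - P))\<^sup>2 + (norm P)\<^sup>2"
    using o by (simp add: power2_norm_eq_inner inner_diff_left inner_diff_right inner_commute)
  then have "(norm P)\<^sup>2 \<le> (norm g)\<^sup>2" by simp
  then show "norm (closest_point T g) \<le> norm g"
    unfolding P_def[symmetric] by (rule power2_le_imp_le) simp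
qed

lemma vector_derivative_in_closed_subspace:
  fixes h :: "real \<Rightarrow> 'a::euclidean_space"
  assumes "(h has_vector_derivative w) (at 0)" "subspace L" "h 0 \<in> L"
    "eventually (\<lambda>t. h t \<in> L) (at 0)"
  shows "w \<in> L"
proof -
  define q where "q t = (1 / t) *\<^sub>R (h t - h 0)" for t
  have lim: "(q \<longlongrightarrow> w) (at 0)"
  proof (rule tendsto_componentwise_iff[THEN iffD2], rule ballI)
    fix b :: 'a assume "b \<in> Basis"
    have "((\<lambda>t. h t \<bullet> b) has_derivative (\<lambda>t. (t *\<^sub>R w) \<bullet> b)) (at 0 within UNIV)"
      using has_derivative_componentwise_within[THEN iffD1,
          OF assms(1)[unfolded has_vector_derivative_def]] \<open>b \<in> Basis\<close> by blast
    moreover have "(\<lambda>t. (t *\<^sub>R w) \<bullet> b) = (*) (w \<bullet> b)"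
      by (auto simp: mult.commute)
    ultimately have "((\<lambda>t. h t \<bullet> b) has_field_derivative (w \<bullet> b)) (at 0)"
      by (simp add: has_field_derivative_def)
    then have "((\<lambda>t. (h t \<bullet> b - h 0 \<bullet> b) / (t - 0)) \<longlongrightarrow> w \<bullet> b) (at 0)"
      by (rule has_field_derivative_iff[THEN iffD1])
    then show "((\<lambda>t. q t \<bullet> b) \<longlongrightarrow> w \<bullet> b) (at 0)"
      by (simp add: q_def inner_diff_left divide_inverse mult.commute)
  qed
  have "eventually (\<lambda>t. q t \<in> L) (at 0)"
    using assms(4) by (rule eventually_mono) (simp add: q_def assms(2,3) subspace_diff subspace_mul)
  then show ?thesis
    by (rule Lim_in_closed_set[OF closed_subspace[OF assms(2)] _ _ lim]) simp
qed

lemma tangent_space_subset_chart_preimage: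
  fixes M :: "'a::euclidean_space set" and \<psi> :: "'a \<Rightarrow> 'a"
  assumes "open U" "x \<in> U" "(\<psi> has_derivative D) (at x)" "\<psi> ` (M \<inter> U) \<subseteq> L" "subspace L"
  shows "tangent_space M x \<subseteq> {w. D w \<in> L}"
proof
  fix v assume "v \<in> tangent_space M x"
  then obtain \<gamma> :: "real \<Rightarrow> 'a" and e where "e > 0" and \<gamma>M: "\<forall>t\<in>{-e<..<e}. \<gamma> t \<in> M"
    and "\<gamma> 0 = x" and \<gamma>v: "(\<gamma> has_vector_derivative v) (at 0)"
    unfolding tangent_space_def by blast
  have "(\<gamma> \<longlongrightarrow> x) (at 0)"
    using has_vector_derivative_continuous[OF \<gamma>v] \<open>\<gamma> 0 = x\<close> by (simp add: continuous_at)
  then have "eventually (\<lambda>t. \<gamma> t \<in> U) (at 0)"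
    using assms(1,2) topological_tendstoD by blast
  moreover have "eventually (\<lambda>t. t \<in> {-e<..<e}) (at (0::real))"
    using \<open>e > 0\<close> by (intro eventually_at_in_open') auto
  ultimately have ev: "eventually (\<lambda>t. (\<psi> \<circ> \<gamma>) t \<in> L) (at 0)"
    by eventually_elim (use \<gamma>M assms(4) in auto)
  have h0: "(\<psi> \<circ> \<gamma>) 0 \<in> L"
    using \<gamma>M \<open>e > 0\<close> \<open>\<gamma> 0 = x\<close> assms(2,4) by auto
  have dv: "((\<psi> \<circ> \<gamma>) has_vector_derivative D v) (at 0)"
  proof -
    have "((\<psi> \<circ> \<gamma>) has_derivative (\<lambda>t. D (t *\<^sub>R v))) (at 0)"
      using diff_chain_at[OF \<gamma>v[unfolded has_vector_derivative_def], of \<psi> D] assms(3) \<open>\<gamma> 0 = x\<close>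
      by (simp add: o_def)
    then show ?thesis
      using linear_scale[OF has_derivative_linear[OF assms(3)]] by (simp add: has_vector_derivative_def)
  qed
  show "v \<in> {w. D w \<in> L}"
    using vector_derivative_in_closed_subspace[OF dv assms(5) h0 ev] by simp
qed

lemma open_contains_line_segment:
  fixes a u :: "'a::real_normed_vector"
  assumes "open V" "a \<in> V"
  obtains e where "e > 0" "\<And>t. t \<in> {-e<..<e} \<Longrightarrow> a + t *\<^sub>R u \<in> V"
proof -
  have "open ((\<lambda>t::real. a + t *\<^sub>R u) -` V)"
    using assms(1) by (intro continuous_open_vimage continuous_intros) auto
  moreover have "0 \<in> (\<lambda>t::real. a + t *\<^sub>R u) -` V" using assms(2) by simp
  ultimately obtain e where "e > 0" "ball 0 e \<subseteq> (\<lambda>t::real. a + t *\<^sub>R u) -` V"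
    using open_contains_ball by blast
  then show thesis using that[of e] by (simp add: ball_eq_greaterThanLessThan subset_eq)
qed

lemma has_derivative_left_inverse:
  assumes "(\<psi> has_derivative D) (at x)" "(\<psi>' has_derivative D') (at (\<psi> x))"
    and "open U" "x \<in> U" "\<And>z. z \<in> U \<Longrightarrow> \<psi>' (\<psi> z) = z"
  shows "D' (D w) = w"
proof -
  have "((\<psi>' \<circ> \<psi>) has_derivative (D' \<circ> D)) (at x)"
    by (rule diff_chain_at[OF assms(1,2)])
  moreover have "((\<psi>' \<circ> \<psi>) has_derivative (\<lambda>z. z)) (at x)"
    by (rule has_derivative_transform_within_open[OF has_derivative_ident assms(3,4)])
      (use assms(5) in simp)
  ultimately have "D' \<circ> D = (\<lambda>z. z)" by (rule has_derivative_unique)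
  then show ?thesis by (metis comp_apply)
qed

lemma chart_preimage_subset_tangent_space:
  fixes M :: "'a::euclidean_space set" and \<psi> \<psi>' :: "'a \<Rightarrow> 'a"
  assumes "open U" "open V" "x \<in> U" "smooth_on V \<psi>'" "(\<psi> has_derivative D) (at x)"
    "\<And>z. z \<in> U \<Longrightarrow> \<psi> z \<in> V \<and> \<psi>' (\<psi> z) = z" "V \<inter> L \<subseteq> \<psi> ` (M \<inter> U)" "subspace L" "\<psi> x \<in> L"
  shows "{w. D w \<in> L} \<subseteq> tangent_space M x"
proof
  fix w assume "w \<in> {w. D w \<in> L}"
  define a where "a = \<psi> x"
  have "a \<in> V" using assms(3,6) unfolding a_def by blast
  then obtain e where "e > 0" and inV: "\<And>t. t \<in> {-e<..<e} \<Longrightarrow> a + t *\<^sub>R D w \<in> V"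
    using open_contains_line_segment[OF assms(2)] by blast
  have inL: "a + t *\<^sub>R D w \<in> L" for t
    using \<open>w \<in> _\<close> assms(8,9) unfolding a_def by (simp add: subspace_add subspace_mul)
  define \<gamma> where "\<gamma> t = \<psi>' (a + t *\<^sub>R D w)" for t
  have "smooth_on {-e<..<e} \<gamma>"
    unfolding \<gamma>_def using inV by (intro smooth_on_compose_line[OF assms(2,4)])
  moreover have "\<forall>t\<in>{-e<..<e}. \<gamma> t \<in> M"
  proof
    fix t assume "t \<in> {-e<..<e}"
    then obtain z where "z \<in> M \<inter> U" "a + t *\<^sub>R D w = \<psi> z" using inV inL assms(7) by blast
    then show "\<gamma> t \<in> M" unfolding \<gamma>_def using assms(6) by auto
  qed
  moreover have "\<gamma> 0 = x" unfolding \<gamma>_def a_def using assms(3,6) by simp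
  moreover have "(\<gamma> has_vector_derivative w) (at 0)"
  proof -
    define D' where "D' = frechet_derivative \<psi>' (at a)"
    have "\<psi>' differentiable at a" by (rule smooth_on_imp_differentiable[OF assms(4,2) \<open>a \<in> V\<close>])
    then have hD': "(\<psi>' has_derivative D') (at a)"
      unfolding D'_def by (simp add: frechet_derivative_works[symmetric])
    have "(\<gamma> has_derivative (\<lambda>s. D' (s *\<^sub>R D w))) (at 0)"
      using has_derivative_compose_line[of \<psi>' a 0 "D w"] \<open>\<psi>' differentiable at a\<close>
      unfolding \<gamma>_def D'_def by simp
    moreover have "D' (D w) = w"
      using has_derivative_left_inverse[OF assms(5) hD'[unfolded a_def] assms(1,3)] assms(6) by blast
    ultimately show ?thesis
      unfolding has_vector_derivative_def using linear_scale[OF has_derivative_linear[OF hD']] by simp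
  qed
  ultimately show "w \<in> tangent_space M x"
    unfolding tangent_space_def using \<open>e > 0\<close> by blast
qed

lemma tangent_space_subspace:
  fixes M :: "'a::euclidean_space set"
  assumes "embedded_submanifold M d" "x \<in> M"
  shows "subspace (tangent_space M x)"
proof -
  obtain U V L and \<psi> \<psi>' :: "'a \<Rightarrow> 'a" where "open U" "open V" "x \<in> U" "subspace L"
    "smooth_on U \<psi>" "smooth_on V \<psi>'" "\<forall>z\<in>U. \<psi> z \<in> V \<and> \<psi>' (\<psi> z) = z" "\<psi> ` (M \<inter> U) = V \<inter> L"
    using assms unfolding embedded_submanifold_def by metis
  define D where "D = frechet_derivative \<psi> (at x)"
  have hD: "(\<psi> has_derivative D) (at x)"
    unfolding D_def using smooth_on_imp_differentiable[OF \<open>smooth_on U \<psi>\<close> \<open>open U\<close> \<open>x \<in> U\<close>]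
    by (simp add: frechet_derivative_works[symmetric])
  have "\<psi> x \<in> L" using \<open>\<psi> ` (M \<inter> U) = V \<inter> L\<close> \<open>x \<in> U\<close> assms(2) by blast
  have "tangent_space M x \<subseteq> {w. D w \<in> L}"
    by (rule tangent_space_subset_chart_preimage[OF \<open>open U\<close> \<open>x \<in> U\<close> hD _ \<open>subspace L\<close>])
      (use \<open>\<psi> ` (M \<inter> U) = V \<inter> L\<close> in blast)
  moreover have "{w. D w \<in> L} \<subseteq> tangent_space M x"
    by (rule chart_preimage_subset_tangent_space[OF \<open>open U\<close> \<open>open V\<close> \<open>x \<in> U\<close>
          \<open>smooth_on V \<psi>'\<close> hD _ _ \<open>subspace L\<close> \<open>\<psi> x \<in> L\<close>])
      (use \<open>\<forall>z\<in>U. _\<close> \<open>\<psi> ` (M \<inter> U) = V \<inter> L\<close> in auto)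
  ultimately have "tangent_space M x = {w. D w \<in> L}" by (rule equalityI)
  moreover have "subspace {w. D w \<in> L}"
    using \<open>subspace L\<close> has_derivative_linear[OF hD] unfolding subspace_def
    by (simp add: linear_0 linear_add linear_scale)
  ultimately show ?thesis by simp
qed

section \<open>Retractions\<close>

lemma retraction_extension_derivative:
  fixes G :: "'a::euclidean_space \<times> 'a \<Rightarrow> 'a"
  assumes "subspace T" "v \<in> T" "(Rx has_derivative (\<lambda>v. v)) (at 0 within T)"
    and "open U" "(x, 0) \<in> U" "(G has_derivative DG) (at (x, 0))"
    and "\<And>w. w \<in> T \<Longrightarrow> (x, w) \<in> U \<Longrightarrow> G (x, w) = Rx w"
  shows "DG (0, v) = v"
proof -
  have "((\<lambda>t::real. (x, t *\<^sub>R v)) has_derivative (\<lambda>t. (0, t *\<^sub>R v))) (at 0)"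
    by (auto intro!: derivative_eq_intros)
  from has_derivative_compose[OF this] assms(6)
  have DG: "((\<lambda>t. G (x, t *\<^sub>R v)) has_derivative (\<lambda>t. DG (0, t *\<^sub>R v))) (at 0)"
    by simp
  have "range (\<lambda>t::real. t *\<^sub>R v) \<subseteq> T"
    using assms(1,2) subspace_mul by blast
  then have "(Rx has_derivative (\<lambda>v. v)) (at ((\<lambda>t::real. t *\<^sub>R v) 0) within range (\<lambda>t. t *\<^sub>R v))"
    using has_derivative_subset[OF assms(3)] by simp
  from has_derivative_in_compose[OF _ this, of "\<lambda>t. t *\<^sub>R v"]
  have "((\<lambda>t. Rx (t *\<^sub>R v)) has_derivative (\<lambda>t. t *\<^sub>R v)) (at 0)"
    by (simp add: has_derivative_scaleR_left[OF has_derivative_ident])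
  moreover have "open ((\<lambda>t::real. (x, t *\<^sub>R v)) -` U)" "0 \<in> (\<lambda>t::real. (x, t *\<^sub>R v)) -` U"
    using assms(4,5) by (auto intro!: continuous_open_vimage continuous_intros)
  ultimately have "((\<lambda>t. G (x, t *\<^sub>R v)) has_derivative (\<lambda>t. t *\<^sub>R v)) (at 0)"
    by (rule has_derivative_transform_within_open) (simp add: assms(7) subspace_mul[OF assms(1,2)])
  from has_derivative_unique[OF DG this] show ?thesis
    by (metis scaleR_one)
qed

lemma retraction_local_extension:
  fixes M :: "'a::euclidean_space set"
  assumes "retraction M R" "xs \<in> M" "0 \<in> tangent_space M xs"
  obtains U and G :: "'a \<times> 'a \<Rightarrow> 'a" where "open U" "(xs, 0) \<in> U" "smooth_on U G"
    "\<And>x v. x \<in> M \<Longrightarrow> v \<in> tangent_space M x \<Longrightarrow> (x, v) \<in> U \<Longrightarrow> G (x, v) = R x v"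
proof -
  have "(xs, 0) \<in> tangent_bundle M" unfolding tangent_bundle_def using assms(2,3) by blast
  then have "\<exists>U G. open U \<and> (xs, 0) \<in> U \<and> smooth_on U G \<and>
      (\<forall>q\<in>tangent_bundle M \<inter> U. G q = (\<lambda>(x, v). R x v) q)"
    using assms(1) unfolding retraction_def smooth_map_on_def by blast
  then show thesis using that unfolding tangent_bundle_def by fastforce
qed

lemma dist_Pair_le:
  fixes a c :: "'a::real_normed_vector" and b d :: "'b::real_normed_vector"
  shows "dist (a, b) (c, d) \<le> dist a c + dist b d"
  using norm_Pair_le[of "a - c" "b - d"] by (simp add: dist_norm)

lemma retraction_first_order:
  fixes M :: "'a::euclidean_space set"
  assumes TS: "\<And>z. z \<in> M \<Longrightarrow> subspace (tangent_space M z)"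
    and "retraction M R" "xs \<in> M" "\<epsilon> > 0"
  obtains \<rho> where "\<rho> > 0" "\<And>x v. x \<in> M \<Longrightarrow> v \<in> tangent_space M x \<Longrightarrow> dist x xs < \<rho> \<Longrightarrow>
      norm v < \<rho> \<Longrightarrow> norm (R x v - x - v) \<le> \<epsilon> * norm v"
proof -
  obtain U and G :: "'a \<times> 'a \<Rightarrow> 'a" where "open U" "(xs, 0) \<in> U" "smooth_on U G"
    and GR: "\<And>x v. x \<in> M \<Longrightarrow> v \<in> tangent_space M x \<Longrightarrow> (x, v) \<in> U \<Longrightarrow> G (x, v) = R x v"
    using retraction_local_extension[OF assms(2,3) subspace_0[OF TS[OF assms(3)]]] by blast
  define DG where "DG = (\<lambda>p. frechet_derivative G (at p))"
  have dG: "(G has_derivative DG p) (at p)" if "p \<in> U" for p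
    unfolding DG_def using smooth_on_imp_differentiable[OF \<open>smooth_on U G\<close> \<open>open U\<close> that]
    by (simp add: frechet_derivative_works[symmetric])
  obtain \<rho> where "\<rho> > 0" "ball (xs, 0) \<rho> \<subseteq> U" and lin: "\<And>p q. p \<in> ball (xs, 0) \<rho> \<Longrightarrow>
      q \<in> ball (xs, 0) \<rho> \<Longrightarrow> norm (G q - G p - DG p (q - p)) \<le> \<epsilon> * norm (q - p)"
    by (rule uniform_linearization[OF \<open>open U\<close> \<open>(xs, 0) \<in> U\<close> dG _ assms(4)])
      (use smooth_on_opnorm_continuous_derivative[OF \<open>smooth_on U G\<close> \<open>open U\<close> \<open>(xs, 0) \<in> U\<close>]
        in \<open>auto simp: DG_def\<close>)
  show thesis
  proof (rule that[of "\<rho> / 2"])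
    show "\<rho> / 2 > 0" using \<open>\<rho> > 0\<close> by simp
    fix x v assume "x \<in> M" "v \<in> tangent_space M x" "dist x xs < \<rho> / 2" "norm v < \<rho> / 2"
    have "(x, w) \<in> ball (xs, 0) \<rho>" if "norm w < \<rho> / 2" for w :: 'a
      using dist_Pair_le[of xs 0 x w] that \<open>dist x xs < \<rho> / 2\<close> by (simp add: dist_commute)
    then have x0: "(x, 0::'a) \<in> ball (xs, 0) \<rho>" and xv: "(x, v) \<in> ball (xs, 0) \<rho>"
      using \<open>\<rho> > 0\<close> \<open>norm v < \<rho> / 2\<close> by auto
    then have x0U: "(x, 0) \<in> U" and xvU: "(x, v) \<in> U"
      using \<open>ball (xs, 0) \<rho> \<subseteq> U\<close> by blast+
    have T: "subspace (tangent_space M x)" using TS[OF \<open>x \<in> M\<close>] .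
    have "G (x, 0) = x"
      using GR[OF \<open>x \<in> M\<close> subspace_0[OF T] x0U] \<open>retraction M R\<close> \<open>x \<in> M\<close>
      unfolding retraction_def by simp
    moreover have "G (x, v) = R x v"
      by (rule GR[OF \<open>x \<in> M\<close> \<open>v \<in> _\<close> xvU])
    moreover have "DG (x, 0) (0, v) = v"
      using \<open>retraction M R\<close> \<open>x \<in> M\<close> unfolding retraction_def
      by (intro retraction_extension_derivative[OF T \<open>v \<in> _\<close> _ \<open>open U\<close> x0U dG[OF x0U]
            GR[OF \<open>x \<in> M\<close>]]) auto
    ultimately show "norm (R x v - x - v) \<le> \<epsilon> * norm v"
      using lin[OF x0 xv] by simp
  qed
qed

section \<open>The Armijo condition near a point\<close>

lemma norm_le_twice_if_close:
  fixes y v :: "'a::real_normed_vector"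
  assumes "norm (y - v) \<le> e * norm v" "e \<le> 1"
  shows "norm y \<le> 2 * norm v"
proof -
  have "norm y \<le> norm (y - v) + norm v" using norm_triangle_sub[of y v] by (simp add: add.commute)
  moreover have "e * norm v \<le> 1 * norm v" using assms(2) by (rule mult_right_mono) simp
  ultimately show ?thesis using assms(1) by linarith
qed

lemma armijo_of_first_order_errors:
  fixes g P y z :: "'a::real_inner"
  assumes "g \<bullet> P = (norm P)\<^sup>2" "norm g \<le> H" "0 < s" "\<delta> \<le> norm P" "\<sigma> \<le> 1"
    and "a - b - g \<bullet> (y - z) \<le> eg * norm (y - z)" "norm (y - z + s *\<^sub>R P) \<le> er * (s * norm P)"
    and "0 \<le> eg" "er \<le> 1" "H * er + 2 * eg \<le> (1 - \<sigma>) * \<delta>"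
  shows "a \<le> b - \<sigma> * s * (norm P)\<^sup>2"
proof -
  define w where "w = s * norm P"
  have "0 \<le> w" unfolding w_def using \<open>0 < s\<close> by simp
  have "norm (y - z - (- s *\<^sub>R P)) \<le> er * norm (- s *\<^sub>R P)"
    using assms(7) \<open>0 < s\<close> by simp
  then have "norm (y - z) \<le> 2 * w"
    using norm_le_twice_if_close[OF _ \<open>er \<le> 1\<close>] \<open>0 < s\<close> unfolding w_def by fastforce
  then have "eg * norm (y - z) \<le> eg * (2 * w)"
    using \<open>0 \<le> eg\<close> by (rule mult_left_mono)
  moreover have "g \<bullet> (y - z + s *\<^sub>R P) \<le> H * (er * w)"
    using norm_cauchy_schwarz[of g "y - z + s *\<^sub>R P"] assms(2,7) \<open>0 \<le> w\<close> unfolding w_def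
    by (smt (verit) mult_mono norm_ge_zero)
  moreover have "g \<bullet> (y - z) = g \<bullet> (y - z + s *\<^sub>R P) - s * (norm P)\<^sup>2"
    using assms(1) by (simp add: inner_add_right)
  moreover have "H * er + 2 * eg \<le> (1 - \<sigma>) * norm P"
    using assms(10) mult_left_mono[OF assms(4), of "1 - \<sigma>"] assms(5) by linarith
  then have "(H * er + 2 * eg) * w \<le> (1 - \<sigma>) * norm P * w"
    using \<open>0 \<le> w\<close> by (rule mult_right_mono)
  then have "H * (er * w) + eg * (2 * w) \<le> s * (norm P)\<^sup>2 - \<sigma> * s * (norm P)\<^sup>2"
    unfolding w_def by (simp add: power2_eq_square algebra_simps)
  ultimately show ?thesis
    using assms(6) by linarith
qed

lemma retraction_first_order_expansion:
  fixes M :: "'a::euclidean_space set" and \<phi> :: "'a \<Rightarrow> real"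
  assumes TS: "\<And>z. z \<in> M \<Longrightarrow> subspace (tangent_space M z)" and "retraction M R"
    and "\<And>z. (\<phi> has_derivative (\<lambda>h. g z \<bullet> h)) (at z)" "continuous_on UNIV g"
    and "xs \<in> M" "eg > 0" "er > 0" "er \<le> 1"
  obtains \<rho> where "\<rho> > 0"
    "\<And>z v. z \<in> M \<Longrightarrow> v \<in> tangent_space M z \<Longrightarrow> dist z xs < \<rho> \<Longrightarrow> norm v < \<rho> \<Longrightarrow>
       norm (R z v - z - v) \<le> er * norm v \<and> \<phi> (R z v) - \<phi> z - g z \<bullet> (R z v - z) \<le> eg * norm (R z v - z)"
proof -
  obtain \<rho>F where "\<rho>F > 0" and F: "\<And>p q. dist p xs < \<rho>F \<Longrightarrow> dist q xs < \<rho>F \<Longrightarrow>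
      \<phi> q - \<phi> p - g p \<bullet> (q - p) \<le> eg * norm (q - p)"
    using gradient_uniform_linearization[OF assms(3,4,6)] by blast
  obtain \<rho>R where "\<rho>R > 0" and R: "\<And>x v. x \<in> M \<Longrightarrow> v \<in> tangent_space M x \<Longrightarrow> dist x xs < \<rho>R \<Longrightarrow>
      norm v < \<rho>R \<Longrightarrow> norm (R x v - x - v) \<le> er * norm v"
    using retraction_first_order[OF TS assms(2,5,7)] by blast
  show thesis
  proof (rule that[of "min (\<rho>F / 3) \<rho>R"])
    show "min (\<rho>F / 3) \<rho>R > 0" using \<open>\<rho>F > 0\<close> \<open>\<rho>R > 0\<close> by simp
    fix z v assume "z \<in> M" "v \<in> tangent_space M z" "dist z xs < min (\<rho>F / 3) \<rho>R" "norm v < min (\<rho>F / 3) \<rho>R"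
    then have Rv: "norm (R z v - z - v) \<le> er * norm v" using R by simp
    have "norm (R z v - z) \<le> 2 * norm v"
      using norm_le_twice_if_close[OF Rv \<open>er \<le> 1\<close>] .
    then have "dist (R z v) xs < \<rho>F"
      using dist_triangle[of "R z v" xs z] \<open>dist z xs < _\<close> \<open>norm v < _\<close> by (simp add: dist_norm)
    moreover have "dist z xs < \<rho>F"
      using \<open>dist z xs < _\<close> zero_le_dist[of z xs] by linarith
    ultimately show "norm (R z v - z - v) \<le> er * norm v \<and>
        \<phi> (R z v) - \<phi> z - g z \<bullet> (R z v - z) \<le> eg * norm (R z v - z)"
      using Rv F[of z "R z v"] by simp
  qed
qed

lemma armijo_condition_near:
  fixes M :: "'a::euclidean_space set" and \<phi> :: "'a \<Rightarrow> real"
  assumes TS: "\<And>z. z \<in> M \<Longrightarrow> subspace (tangent_space M z)" and "retraction M R"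
    and "\<And>z. (\<phi> has_derivative (\<lambda>h. g z \<bullet> h)) (at z)" "continuous_on UNIV g"
    and "xs \<in> M" "\<sigma> < 1" "\<delta> > 0"
  obtains \<rho> s0 where "\<rho> > 0" "s0 > 0"
    "\<And>z s. z \<in> M \<Longrightarrow> dist z xs < \<rho> \<Longrightarrow> \<delta> < norm (closest_point (tangent_space M z) (g z)) \<Longrightarrow>
       0 < s \<Longrightarrow> s \<le> s0 \<Longrightarrow>
       \<phi> (R z (s *\<^sub>R - closest_point (tangent_space M z) (g z)))
         \<le> \<phi> z - \<sigma> * s * (norm (closest_point (tangent_space M z) (g z)))\<^sup>2"
proof -
  define H where "H = norm (g xs) + 1"
  define c where "c = (1 - \<sigma>) * \<delta>"
  define er where "er = min 1 (c / (2 * H))"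
  have "H > 0" "c > 0" unfolding H_def c_def using assms(6,7) by (auto intro: add_nonneg_pos)
  then have "er > 0" "er \<le> 1" "H * er + 2 * (c / 4) \<le> c" "c / 4 > 0"
    unfolding er_def by (auto simp: min_def field_simps)
  obtain \<rho>1 where "\<rho>1 > 0" and expansion: "\<And>z v. z \<in> M \<Longrightarrow> v \<in> tangent_space M z \<Longrightarrow>
      dist z xs < \<rho>1 \<Longrightarrow> norm v < \<rho>1 \<Longrightarrow> norm (R z v - z - v) \<le> er * norm v \<and>
      \<phi> (R z v) - \<phi> z - g z \<bullet> (R z v - z) \<le> c / 4 * norm (R z v - z)"
    using retraction_first_order_expansion[OF TS assms(2-5) \<open>c / 4 > 0\<close> \<open>er > 0\<close> \<open>er \<le> 1\<close>] by blast
  obtain \<rho>g where "\<rho>g > 0" and "\<And>z. dist z xs < \<rho>g \<Longrightarrow> dist (g z) (g xs) < 1"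
    using assms(4) unfolding continuous_on_iff by (meson UNIV_I zero_less_one)
  then have gH: "norm (g z) \<le> H" if "dist z xs < \<rho>g" for z
    using that norm_triangle_ineq2[of "g z" "g xs"] unfolding H_def dist_norm by fastforce
  define \<rho> where "\<rho> = min \<rho>1 \<rho>g"
  show thesis
  proof (rule that[of \<rho> "\<rho> / (2 * H)"])
    show "\<rho> > 0" "\<rho> / (2 * H) > 0" unfolding \<rho>_def using \<open>\<rho>1 > 0\<close> \<open>\<rho>g > 0\<close> \<open>H > 0\<close> by auto
    fix z s assume "z \<in> M" "dist z xs < \<rho>"
      and "\<delta> < norm (closest_point (tangent_space M z) (g z))" "0 < s" "s \<le> \<rho> / (2 * H)"
    define P where "P = closest_point (tangent_space M z) (g z)"
    note proj = closest_point_subspace[OF TS[OF \<open>z \<in> M\<close>], of "g z", folded P_def]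
    have "norm (g z) \<le> H" using gH \<open>dist z xs < \<rho>\<close> unfolding \<rho>_def by simp
    have "s * norm P \<le> \<rho> / (2 * H) * H"
      using proj(3) \<open>norm (g z) \<le> H\<close> \<open>0 < s\<close> \<open>s \<le> \<rho> / (2 * H)\<close> by (intro mult_mono) auto
    also have "\<dots> < \<rho>" using \<open>\<rho> > 0\<close> \<open>H > 0\<close> by simp
    finally have "norm (s *\<^sub>R - P) < \<rho>1" using \<open>0 < s\<close> unfolding \<rho>_def by simp
    moreover have "s *\<^sub>R - P \<in> tangent_space M z"
      using proj(1) TS[OF \<open>z \<in> M\<close>] by (simp add: subspace_mul subspace_neg)
    moreover have "dist z xs < \<rho>1" using \<open>dist z xs < \<rho>\<close> unfolding \<rho>_def by simp
    ultimately have exp: "norm (R z (s *\<^sub>R - P) - z - s *\<^sub>R - P) \<le> er * norm (s *\<^sub>R - P) \<and>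
      \<phi> (R z (s *\<^sub>R - P)) - \<phi> z - g z \<bullet> (R z (s *\<^sub>R - P) - z) \<le> c / 4 * norm (R z (s *\<^sub>R - P) - z)"
      using expansion[OF \<open>z \<in> M\<close>] by blast
    then have "norm (R z (s *\<^sub>R - P) - z + s *\<^sub>R P) \<le> er * (s * norm P)"
      using \<open>0 < s\<close> by simp
    then show "\<phi> (R z (s *\<^sub>R - P)) \<le> \<phi> z - \<sigma> * s * (norm P)\<^sup>2"
      using exp \<open>\<delta> < _\<close> assms(6) \<open>er \<le> 1\<close> \<open>c / 4 > 0\<close> \<open>H * er + 2 * (c / 4) \<le> c\<close> unfolding P_def c_def
      by (intro armijo_of_first_order_errors[OF proj(2)[unfolded P_def] \<open>norm (g z) \<le> H\<close> \<open>0 < s\<close>,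
            where eg = "c / 4" and er = er]) (auto simp: c_def)
  qed
qed

section \<open>Convergence of the smoothing steepest descent\<close>

lemma tendsto_zero_if_contracted_infinitely_often:
  fixes d :: "nat \<Rightarrow> real"
  assumes "infinite K" "0 < \<theta>" "\<theta> < 1" "\<And>l. 0 < d l"
    and "\<And>l. l \<in> K \<Longrightarrow> d (Suc l) = \<theta> * d l" "\<And>l. l \<notin> K \<Longrightarrow> d (Suc l) = d l"
  shows "d \<longlonglongrightarrow> 0"
proof -
  have bound: "d l \<le> d 0 * \<theta> ^ card (K \<inter> {..<l})" for l
  proof (induction l)
    case (Suc l)
    show ?case
    proof (cases "l \<in> K")
      case True
      then have "card (K \<inter> {..<Suc l}) = Suc (card (K \<inter> {..<l}))"
        by (simp add: lessThan_Suc Int_insert_right)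
      then show ?thesis using Suc.IH assms(2,5) True by (simp add: mult.left_commute)
    next
      case False
      then have "K \<inter> {..<Suc l} = K \<inter> {..<l}" by (auto simp: less_Suc_eq)
      then show ?thesis using Suc.IH assms(6) False by simp
    qed
  qed simp
  show ?thesis
  proof (rule LIMSEQ_I)
    fix r :: real assume "r > 0"
    obtain N where N: "\<theta> ^ N < r / d 0"
      using real_arch_pow_inv[of "r / d 0" \<theta>] \<open>r > 0\<close> assms(2-4) by auto
    obtain F where "F \<subseteq> K" "finite F" "card F = N"
      using infinite_arbitrarily_large[OF assms(1)] by blast
    obtain l0 where l0: "\<forall>n\<in>F. n < l0" using \<open>finite F\<close> finite_nat_set_iff_bounded by blast
    have "norm (d n) < r" if "n \<ge> l0" for n
    proof -
      have "F \<subseteq> K \<inter> {..<n}" using \<open>F \<subseteq> K\<close> l0 that by auto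
      then have "N \<le> card (K \<inter> {..<n})"
        using \<open>card F = N\<close> card_mono by (metis finite_Int finite_lessThan)
      then have "\<theta> ^ card (K \<inter> {..<n}) \<le> \<theta> ^ N" using assms(2,3) by (simp add: power_decreasing)
      then have "d n \<le> d 0 * \<theta> ^ N" using bound[of n] assms(4)[of 0] by (smt (verit) mult_left_mono)
      also have "\<dots> < r" using N assms(4)[of 0] by (simp add: pos_less_divide_eq mult.commute)
      finally show ?thesis using assms(4)[of n] by simp
    qed
    then show "\<exists>no. \<forall>n\<ge>no. norm (d n - 0) < r" by auto
  qed
qed

lemma descent_steps_tendsto_zero:
  fixes a t :: "nat \<Rightarrow> real"
  assumes "\<And>n. c * t n \<le> a n - a (Suc n)" "\<And>n. 0 \<le> t n" "c > 0" "\<And>n. B \<le> a n"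
  shows "t \<longlonglongrightarrow> 0"
proof -
  have "0 \<le> c * t n" for n using assms(2,3) by simp
  then have "decseq a"
    using assms(1) by (intro decseq_SucI) (meson diff_ge_0_iff_ge order.trans)
  then obtain A where "a \<longlonglongrightarrow> A"
    using assms(4) decseq_convergent by blast
  then have "(\<lambda>n. (a n - a (Suc n)) / c) \<longlonglongrightarrow> (A - A) / c"
    by (intro tendsto_intros LIMSEQ_Suc) (use assms(3) in auto)
  moreover have "t n \<le> (a n - a (Suc n)) / c" for n
    using assms(1)[of n] assms(3) by (simp add: field_simps)
  ultimately show ?thesis
    using assms(2) by (intro tendsto_sandwich[of "\<lambda>n. 0" t _ "\<lambda>n. (a n - a (Suc n)) / c"]) auto
qed

lemma retraction_in_manifold:
  "retraction M R \<Longrightarrow> x \<in> M \<Longrightarrow> v \<in> tangent_space M x \<Longrightarrow> R x v \<in> M"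
  unfolding retraction_def tangent_bundle_def by auto

locale rssd =
  fixes M :: "'a::euclidean_space set" and ft :: "'a \<Rightarrow> real \<Rightarrow> real" and gradf :: "'a \<Rightarrow> real \<Rightarrow> 'a"
    and R :: "'a \<Rightarrow> 'a \<Rightarrow> 'a" and x0 :: 'a and \<delta>0 \<mu>0 \<beta> \<alpha> \<theta>\<delta> \<theta>\<mu> \<sigma> :: real
    and x :: "nat \<Rightarrow> 'a" and \<mu> \<delta> :: "nat \<Rightarrow> real" and \<eta> :: "nat \<Rightarrow> 'a"
  assumes tangent_subspace: "\<And>z. z \<in> M \<Longrightarrow> subspace (tangent_space M z)"
    and ft_has_derivative: "\<And>m y. m > 0 \<Longrightarrow> ((\<lambda>z. ft z m) has_derivative (\<lambda>h. gradf y m \<bullet> h)) (at y)"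
    and gradf_continuous: "\<And>m. m > 0 \<Longrightarrow> continuous_on UNIV (\<lambda>y. gradf y m)"
    and retraction: "retraction M R"
    and compact_sublevel: "\<And>m z. m > 0 \<Longrightarrow> z \<in> M \<Longrightarrow> compact {y\<in>M. ft y m \<le> ft z m}"
    and start: "x0 \<in> M" "\<delta>0 > 0" "\<mu>0 > 0"
    and parameters: "0 < \<beta>" "0 < \<alpha>" "0 < \<theta>\<delta>" "\<theta>\<delta> < 1" "0 < \<theta>\<mu>" "\<theta>\<mu> < 1" "0 < \<sigma>" "\<sigma> < 1"
    and run: "rssd_run M ft gradf R x0 0 \<delta>0 0 \<mu>0 \<beta> \<alpha> \<theta>\<delta> \<theta>\<mu> \<sigma> x \<mu> \<delta> \<eta>"
begin

lemma eta_eq: "\<eta> l = - riem_grad M gradf (x l) (\<mu> l)"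
  using run unfolding rssd_run_def by blast

lemma shrink_step:
  assumes "norm (\<eta> l) \<le> \<delta> l"
  shows "\<mu> (Suc l) = \<theta>\<mu> * \<mu> l" "\<delta> (Suc l) = \<theta>\<delta> * \<delta> l" "x (Suc l) = x l"
  using run assms unfolding rssd_run_def by auto

lemma descent_step_parameters:
  assumes "\<delta> l < norm (\<eta> l)"
  shows "\<mu> (Suc l) = \<mu> l" "\<delta> (Suc l) = \<delta> l"
  using run assms unfolding rssd_run_def by auto

lemma backtracking_step:
  assumes "\<delta> l < norm (\<eta> l)"
  obtains t where "0 < t" "x (Suc l) = R (x l) (t *\<^sub>R \<eta> l)"
    "ft (x (Suc l)) (\<mu> l) \<le> ft (x l) (\<mu> l) - \<sigma> * t * (norm (\<eta> l))\<^sup>2"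
    "t = \<alpha> \<or> \<not> ft (R (x l) ((t / \<beta>) *\<^sub>R \<eta> l)) (\<mu> l) \<le> ft (x l) (\<mu> l) - \<sigma> * (t / \<beta>) * (norm (\<eta> l))\<^sup>2"
proof -
  define armijo where "armijo s \<longleftrightarrow>
    ft (R (x l) (s *\<^sub>R \<eta> l)) (\<mu> l) \<le> ft (x l) (\<mu> l) - \<sigma> * s * (norm (\<eta> l))\<^sup>2" for s
  have "norm (riem_grad M gradf (x l) (\<mu> l)) = norm (\<eta> l)" by (simp add: eta_eq)
  moreover have "\<not> norm (\<eta> l) \<le> \<delta> l" using assms by simp
  moreover note run[unfolded rssd_run_def, THEN conjunct2, THEN conjunct2, THEN conjunct2,
      rule_format, of l, THEN conjunct2, THEN conjunct2]
  ultimately obtain m where m: "\<forall>k<m. \<not> armijo (\<beta> ^ k * \<alpha>)" "armijo (\<beta> ^ m * \<alpha>)"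
    "x (Suc l) = R (x l) ((\<beta> ^ m * \<alpha>) *\<^sub>R \<eta> l)"
    unfolding armijo_def by (auto simp only: if_False)
  \<comment> \<open>Unless the first trial step \<open>\<alpha>\<close> was accepted, the previous trial \<open>\<beta>\<^sup>m\<^sup>-\<^sup>1 \<alpha>\<close> failed.\<close>
  have "\<beta> ^ m * \<alpha> = \<alpha> \<or> \<not> armijo (\<beta> ^ m * \<alpha> / \<beta>)"
  proof (cases m)
    case (Suc k)
    then show ?thesis using m(1) parameters(1) by auto
  qed simp
  then show thesis
    using that[of "\<beta> ^ m * \<alpha>"] m(2,3) parameters(1,2) unfolding armijo_def by simp
qed

lemma parameters_positive: "0 < \<mu> l \<and> 0 < \<delta> l"
proof (induction l)
  case 0
  then show ?case using run start unfolding rssd_run_def by simp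
next
  case (Suc l)
  then show ?case
    using shrink_step[of l] descent_step_parameters[of l] parameters by (cases "norm (\<eta> l) \<le> \<delta> l") auto
qed

lemma eta_tangent: "x l \<in> M \<Longrightarrow> \<eta> l \<in> tangent_space M (x l)"
  using closest_point_subspace(1)[OF tangent_subspace] subspace_neg[OF tangent_subspace]
  unfolding eta_eq riem_grad_def by blast

lemma iterates_in_M: "x l \<in> M"
proof (induction l)
  case 0
  then show ?case using run start unfolding rssd_run_def by simp
next
  case (Suc l)
  show ?case
  proof (cases "norm (\<eta> l) \<le> \<delta> l")
    case True
    then show ?thesis using shrink_step(3) Suc by simp
  next
    case False
    then obtain t where "x (Suc l) = R (x l) (t *\<^sub>R \<eta> l)"
      using backtracking_step[of l] by (meson not_le)
    moreover have "t *\<^sub>R \<eta> l \<in> tangent_space M (x l)"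
      using eta_tangent[OF Suc] subspace_mul[OF tangent_subspace[OF Suc]] by blast
    ultimately show ?thesis
      using retraction_in_manifold[OF retraction Suc] by simp
  qed
qed

context
  fixes L :: nat
  assumes tail: "\<And>l. L \<le> l \<Longrightarrow> \<delta> l < norm (\<eta> l)"
begin

lemma tail_parameters_constant: "L \<le> l \<Longrightarrow> \<mu> l = \<mu> L \<and> \<delta> l = \<delta> L"
proof (induction l rule: dec_induct)
  case (step l)
  then show ?case using descent_step_parameters[OF tail[OF step(1)]] by simp
qed simp

lemma tail_step_sizes:
  obtains t where "\<And>l. L \<le> l \<Longrightarrow> 0 < t l"
    "\<And>l. L \<le> l \<Longrightarrow> ft (x (Suc l)) (\<mu> L) \<le> ft (x l) (\<mu> L) - \<sigma> * t l * (norm (\<eta> l))\<^sup>2"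
    "\<And>l. L \<le> l \<Longrightarrow> t l = \<alpha> \<or>
       \<not> ft (R (x l) ((t l / \<beta>) *\<^sub>R \<eta> l)) (\<mu> L) \<le> ft (x l) (\<mu> L) - \<sigma> * (t l / \<beta>) * (norm (\<eta> l))\<^sup>2"
proof -
  have "\<exists>t. L \<le> l \<longrightarrow> 0 < t \<and> ft (x (Suc l)) (\<mu> L) \<le> ft (x l) (\<mu> L) - \<sigma> * t * (norm (\<eta> l))\<^sup>2 \<and>
      (t = \<alpha> \<or> \<not> ft (R (x l) ((t / \<beta>) *\<^sub>R \<eta> l)) (\<mu> L)
                   \<le> ft (x l) (\<mu> L) - \<sigma> * (t / \<beta>) * (norm (\<eta> l))\<^sup>2)" for l
  proof (cases "L \<le> l")
    case True
    obtain t where "0 < t" "x (Suc l) = R (x l) (t *\<^sub>R \<eta> l)"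
      "ft (x (Suc l)) (\<mu> l) \<le> ft (x l) (\<mu> l) - \<sigma> * t * (norm (\<eta> l))\<^sup>2"
      "t = \<alpha> \<or> \<not> ft (R (x l) ((t / \<beta>) *\<^sub>R \<eta> l)) (\<mu> l)
                 \<le> ft (x l) (\<mu> l) - \<sigma> * (t / \<beta>) * (norm (\<eta> l))\<^sup>2"
      by (rule backtracking_step[OF tail[OF True]])
    then show ?thesis using tail_parameters_constant[OF True] by (intro exI[of _ t]) simp
  qed simp
  from choice[OF allI[OF this]] obtain t where "\<forall>l. L \<le> l \<longrightarrow> 0 < t l \<and>
      ft (x (Suc l)) (\<mu> L) \<le> ft (x l) (\<mu> L) - \<sigma> * t l * (norm (\<eta> l))\<^sup>2 \<and>
      (t l = \<alpha> \<or> \<not> ft (R (x l) ((t l / \<beta>) *\<^sub>R \<eta> l)) (\<mu> L)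
                     \<le> ft (x l) (\<mu> L) - \<sigma> * (t l / \<beta>) * (norm (\<eta> l))\<^sup>2)"
    ..
  then show thesis by (intro that[of t]) auto
qed

lemma tail_in_sublevel: "x (L + n) \<in> {y\<in>M. ft y (\<mu> L) \<le> ft (x L) (\<mu> L)}"
proof -
  obtain t where t_pos: "\<And>l. L \<le> l \<Longrightarrow> 0 < t l"
    and descent: "\<And>l. L \<le> l \<Longrightarrow> ft (x (Suc l)) (\<mu> L) \<le> ft (x l) (\<mu> L) - \<sigma> * t l * (norm (\<eta> l))\<^sup>2"
    and "\<And>l. L \<le> l \<Longrightarrow> t l = \<alpha> \<or>
       \<not> ft (R (x l) ((t l / \<beta>) *\<^sub>R \<eta> l)) (\<mu> L) \<le> ft (x l) (\<mu> L) - \<sigma> * (t l / \<beta>) * (norm (\<eta> l))\<^sup>2"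
    by (rule tail_step_sizes) auto
  have step: "ft (x (L + Suc k)) (\<mu> L) \<le> ft (x (L + k)) (\<mu> L)" for k
  proof -
    have "0 \<le> \<sigma> * t (L + k) * (norm (\<eta> (L + k)))\<^sup>2"
      using t_pos[of "L + k"] parameters(7) by simp
    then show ?thesis using descent[of "L + k"] by simp
  qed
  have "ft (x (L + n)) (\<mu> L) \<le> ft (x L) (\<mu> L)"
  proof (induction n)
    case (Suc n)
    then show ?case using step[of n] by linarith
  qed simp
  then show ?thesis using iterates_in_M by simp
qed

lemma tail_steps_tendsto_zero:
  assumes "\<And>l. L \<le> l \<Longrightarrow> 0 < t l"
    and "\<And>l. L \<le> l \<Longrightarrow> ft (x (Suc l)) (\<mu> L) \<le> ft (x l) (\<mu> L) - \<sigma> * t l * (norm (\<eta> l))\<^sup>2"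
  shows "(\<lambda>n. t (L + n)) \<longlonglongrightarrow> 0"
proof -
  define C where "C = {y\<in>M. ft y (\<mu> L) \<le> ft (x L) (\<mu> L)}"
  have "0 < \<mu> L" "0 < \<delta> L" using parameters_positive by auto
  have "continuous_on C (\<lambda>y. ft y (\<mu> L))"
    using ft_has_derivative[OF \<open>0 < \<mu> L\<close>] has_derivative_continuous
    by (blast intro: continuous_at_imp_continuous_on)
  moreover have "compact C" "C \<noteq> {}"
    unfolding C_def using compact_sublevel[OF \<open>0 < \<mu> L\<close> iterates_in_M] iterates_in_M by auto
  ultimately obtain zmin where zmin: "\<And>y. y \<in> C \<Longrightarrow> ft zmin (\<mu> L) \<le> ft y (\<mu> L)"
    using continuous_attains_inf by metis
  show ?thesis
  proof (rule descent_steps_tendsto_zero)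
    fix n
    have "(\<delta> L)\<^sup>2 \<le> (norm (\<eta> (L + n)))\<^sup>2"
      using tail[of "L + n"] tail_parameters_constant[of "L + n"] \<open>0 < \<delta> L\<close> by (intro power_mono) auto
    then have "\<sigma> * (\<delta> L)\<^sup>2 * t (L + n) \<le> \<sigma> * t (L + n) * (norm (\<eta> (L + n)))\<^sup>2"
      using assms(1)[of "L + n"] parameters by (simp add: mult_left_mono mult.commute mult.left_commute)
    then show "\<sigma> * (\<delta> L)\<^sup>2 * t (L + n) \<le> ft (x (L + n)) (\<mu> L) - ft (x (L + Suc n)) (\<mu> L)"
      using assms(2)[of "L + n"] by simp
  qed (use assms(1)[THEN less_imp_le] parameters \<open>0 < \<delta> L\<close> zmin tail_in_sublevel
        in \<open>auto simp: C_def\<close>)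
qed

lemma tail_armijo_near:
  assumes "xs \<in> M"
  obtains \<rho> s0 where "\<rho> > 0" "s0 > 0" "\<And>l s. L \<le> l \<Longrightarrow> dist (x l) xs < \<rho> \<Longrightarrow> 0 < s \<Longrightarrow> s \<le> s0 \<Longrightarrow>
      ft (R (x l) (s *\<^sub>R \<eta> l)) (\<mu> L) \<le> ft (x l) (\<mu> L) - \<sigma> * s * (norm (\<eta> l))\<^sup>2"
proof -
  have "0 < \<mu> L" "0 < \<delta> L" using parameters_positive by auto
  obtain \<rho> s0 where "\<rho> > 0" "s0 > 0" and armijo: "\<And>z s. z \<in> M \<Longrightarrow> dist z xs < \<rho> \<Longrightarrow>
      \<delta> L < norm (closest_point (tangent_space M z) (gradf z (\<mu> L))) \<Longrightarrow> 0 < s \<Longrightarrow> s \<le> s0 \<Longrightarrow>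
      ft (R z (s *\<^sub>R - closest_point (tangent_space M z) (gradf z (\<mu> L)))) (\<mu> L)
        \<le> ft z (\<mu> L) - \<sigma> * s * (norm (closest_point (tangent_space M z) (gradf z (\<mu> L))))\<^sup>2"
    by (rule armijo_condition_near[OF _ retraction ft_has_derivative[OF \<open>0 < \<mu> L\<close>]
          gradf_continuous[OF \<open>0 < \<mu> L\<close>] assms parameters(8) \<open>0 < \<delta> L\<close>])
      (rule tangent_subspace, auto)
  show thesis
  proof (rule that[OF \<open>\<rho> > 0\<close> \<open>s0 > 0\<close>])
    fix l s assume "L \<le> l" "dist (x l) xs < \<rho>" "0 < s" "s \<le> s0"
    have P: "closest_point (tangent_space M (x l)) (gradf (x l) (\<mu> L)) = - \<eta> l"
      using tail_parameters_constant[OF \<open>L \<le> l\<close>] unfolding eta_eq riem_grad_def by simp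
    have "\<delta> L < norm (closest_point (tangent_space M (x l)) (gradf (x l) (\<mu> L)))"
      using tail[OF \<open>L \<le> l\<close>] tail_parameters_constant[OF \<open>L \<le> l\<close>] unfolding P by simp
    from armijo[OF iterates_in_M \<open>dist (x l) xs < \<rho>\<close> this \<open>0 < s\<close> \<open>s \<le> s0\<close>]
    show "ft (R (x l) (s *\<^sub>R \<eta> l)) (\<mu> L) \<le> ft (x l) (\<mu> L) - \<sigma> * s * (norm (\<eta> l))\<^sup>2"
      unfolding P by simp
  qed
qed

lemma tail_impossible: False
proof -
  obtain t where t_pos: "\<And>l. L \<le> l \<Longrightarrow> 0 < t l"
    and descent: "\<And>l. L \<le> l \<Longrightarrow> ft (x (Suc l)) (\<mu> L) \<le> ft (x l) (\<mu> L) - \<sigma> * t l * (norm (\<eta> l))\<^sup>2"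
    and backtrack: "\<And>l. L \<le> l \<Longrightarrow> t l = \<alpha> \<or> \<not> ft (R (x l) ((t l / \<beta>) *\<^sub>R \<eta> l)) (\<mu> L)
                      \<le> ft (x l) (\<mu> L) - \<sigma> * (t l / \<beta>) * (norm (\<eta> l))\<^sup>2"
    by (rule tail_step_sizes) auto
  define C where "C = {y\<in>M. ft y (\<mu> L) \<le> ft (x L) (\<mu> L)}"
  have "compact C"
    unfolding C_def using compact_sublevel parameters_positive iterates_in_M by blast
  moreover have "\<forall>n. x (L + n) \<in> C" unfolding C_def using tail_in_sublevel by blast
  ultimately obtain xs r where "xs \<in> C" "strict_mono r" and conv: "((\<lambda>n. x (L + n)) \<circ> r) \<longlonglongrightarrow> xs"
    using seq_compactE[OF compact_imp_seq_compact] by metis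
  then have "xs \<in> M" unfolding C_def by simp
  obtain \<rho> s0 where "\<rho> > 0" "s0 > 0" and armijo: "\<And>l s. L \<le> l \<Longrightarrow> dist (x l) xs < \<rho> \<Longrightarrow> 0 < s \<Longrightarrow>
      s \<le> s0 \<Longrightarrow> ft (R (x l) (s *\<^sub>R \<eta> l)) (\<mu> L) \<le> ft (x l) (\<mu> L) - \<sigma> * s * (norm (\<eta> l))\<^sup>2"
    using tail_armijo_near[OF \<open>xs \<in> M\<close>] by blast
  \<comment> \<open>Near the limit point backtracking never needs steps below \<open>\<beta> s0\<close>, yet the steps tend to zero.\<close>
  have "eventually (\<lambda>n. dist (x (L + r n)) xs < \<rho>) sequentially"
    using tendstoD[OF conv \<open>\<rho> > 0\<close>] by (simp add: o_def)
  moreover have "(\<lambda>n. t (L + r n)) \<longlonglongrightarrow> 0"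
    using LIMSEQ_subseq_LIMSEQ[OF tail_steps_tendsto_zero[OF t_pos descent] \<open>strict_mono r\<close>]
    by (simp add: o_def)
  then have "eventually (\<lambda>n. t (L + r n) < min \<alpha> (\<beta> * s0)) sequentially"
    by (rule order_tendstoD(2)) (use \<open>s0 > 0\<close> parameters(1,2) in simp)
  ultimately obtain N where "dist (x (L + r N)) xs < \<rho>" "t (L + r N) < min \<alpha> (\<beta> * s0)"
    using eventually_conj eventually_sequentially order_refl by (metis (no_types, lifting))
  moreover define l where "l = L + r N"
  ultimately have "dist (x l) xs < \<rho>" "t l / \<beta> \<le> s0" "t l \<noteq> \<alpha>" "L \<le> l"
    using parameters(1) by (auto simp: pos_divide_le_eq mult.commute)
  moreover have "0 < t l / \<beta>" using t_pos[of l] parameters(1) \<open>L \<le> l\<close> by simp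
  ultimately have "ft (R (x l) ((t l / \<beta>) *\<^sub>R \<eta> l)) (\<mu> L)
      \<le> ft (x l) (\<mu> L) - \<sigma> * (t l / \<beta>) * (norm (\<eta> l))\<^sup>2"
    using armijo by blast
  then show False
    using backtrack[OF \<open>L \<le> l\<close>] \<open>t l \<noteq> \<alpha>\<close> by simp
qed

end

lemma shrink_steps_infinite: "infinite {l. norm (\<eta> l) \<le> \<delta> l}"
proof
  assume "finite {l. norm (\<eta> l) \<le> \<delta> l}"
  then obtain L where "\<forall>l\<in>{l. norm (\<eta> l) \<le> \<delta> l}. l < L"
    using finite_nat_set_iff_bounded by blast
  then have "\<delta> l < norm (\<eta> l)" if "L \<le> l" for l
    using that not_le by fastforce
  then show False by (rule tail_impossible)
qed

lemma delta_tendsto_zero: "\<delta> \<longlonglongrightarrow> 0"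
  using parameters_positive shrink_step(2) descent_step_parameters(2) parameters(3,4)
  by (intro tendsto_zero_if_contracted_infinitely_often[OF shrink_steps_infinite]) auto

lemma mu_tendsto_zero: "\<mu> \<longlonglongrightarrow> 0"
  using parameters_positive shrink_step(1) descent_step_parameters(1) parameters(5,6)
  by (intro tendsto_zero_if_contracted_infinitely_often[OF shrink_steps_infinite]) auto

end

theorem proposition4p1:
  fixes M :: "'a::euclidean_space set"
    and f :: "'a \<Rightarrow> real" and ft :: "'a \<Rightarrow> real \<Rightarrow> real" and gradf :: "'a \<Rightarrow> real \<Rightarrow> 'a"
    and R :: "'a \<Rightarrow> 'a \<Rightarrow> 'a"
    and x0 :: 'a and \<delta>0 \<mu>0 \<beta> \<alpha> \<theta>\<delta> \<theta>\<mu> \<sigma> :: real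
    and x :: "nat \<Rightarrow> 'a" and \<mu> \<delta> :: "nat \<Rightarrow> real" and \<eta> :: "nat \<Rightarrow> 'a"
  assumes "complete_riemannian_submanifold M"
    and "lsc f"
    and "smoothing_function f ft gradf"
    and "retraction M R"
    and "\<forall>\<mu>b>0. \<forall>xb\<in>M. compact {z\<in>M. ft z \<mu>b \<le> ft xb \<mu>b}"
    and "x0 \<in> M" and "\<delta>0 > 0" and "\<mu>0 > 0" and "0 < \<beta>" and "\<beta> < 1" and "\<alpha> > 0"
    and "0 < \<theta>\<delta>" and "\<theta>\<delta> < 1" and "0 < \<theta>\<mu>" and "\<theta>\<mu> < 1" and "0 < \<sigma>" and "\<sigma> < 1"
    and "rssd_run M ft gradf R x0 0 \<delta>0 0 \<mu>0 \<beta> \<alpha> \<theta>\<delta> \<theta>\<mu> \<sigma> x \<mu> \<delta> \<eta>"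
  shows "infinite {l. norm (\<eta> l) \<le> \<delta> l}
    \<and> (\<delta> \<longlongrightarrow> 0) (inf sequentially (principal {l. norm (\<eta> l) \<le> \<delta> l}))
    \<and> (\<mu> \<longlongrightarrow> 0) (inf sequentially (principal {l. norm (\<eta> l) \<le> \<delta> l}))"
proof -
  obtain d where "embedded_submanifold M d"
    using assms(1) unfolding complete_riemannian_submanifold_def by blast
  interpret rssd M ft gradf R x0 \<delta>0 \<mu>0 \<beta> \<alpha> \<theta>\<delta> \<theta>\<mu> \<sigma> x \<mu> \<delta> \<eta>
  proof unfold_locales
    show "subspace (tangent_space M z)" if "z \<in> M" for z
      using tangent_space_subspace[OF \<open>embedded_submanifold M d\<close> that] .
    show "((\<lambda>z. ft z m) has_derivative (\<lambda>h. gradf y m \<bullet> h)) (at y)"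
      and "continuous_on UNIV (\<lambda>y. gradf y m)" if "m > 0" for m y
      using assms(3) that unfolding smoothing_function_def by blast+
    show "compact {y\<in>M. ft y m \<le> ft z m}" if "m > 0" "z \<in> M" for m z
      using assms(5) that by blast
  qed (use assms(4,6-9,11-18) in auto)
  show ?thesis
    using shrink_steps_infinite delta_tendsto_zero mu_tendsto_zero
    by (auto intro: tendsto_mono[OF inf_le1])
qed

end
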